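(* Let $g\ge1$. Put $u_1=0$, and let $u_2,\dots,u_{2g+1}$ be pairwise distinct nonzero complex numbers varying in a small open set. Consider the hyperelliptic curve $v^2=u\prod_{i=2}^{2g+1}(u-u_i)$. Let $\{\gamma_k\}_{k=1}^{2g}$ be a basis of its first homology, represented by cycles avoiding the branch points and infinity and transported continuously as the $u_j$ vary. Let $\gamma=\sum_{k=1}^{2g}c_k\gamma_k$ with constants $c_k\in\mathbb{C}$. Define $$a_1=-\oint_\gamma\frac{du}{v},\qquad a_i=\oint_\gamma\frac{du}{v}+u_i\oint_\gamma\frac{du}{(u-u_i)v}\quad(2\le i\le 2g+1).$$ Set $\alpha_1=1/4$, $\alpha_i=-1/4$ for $2\le i\le 2g+1$, and $\alpha_\infty=(2g-1)/4$. Then for all $i\in\{1,\dots,2g+1\}$ and $j\in\{2,\dots,2g+1\}$ with $i\neq j$, $$\frac{\partial a_i}{\partial u_j}=\frac{2(\alpha_j a_i-\alpha_i a_j)}{u_j-u_i},$$ and moreover $\sum_{i=1}^{2g+1}a_i=0$. Explicitly, these relations read $$\frac{\partial a_1}{\partial u_j}=-\frac{a_1+a_j}{2u_j},\qquad \frac{\partial a_i}{\partial u_j}=\frac{a_j-a_i}{2(u_j-u_i)}\quad (i,j\ge2,\ i\ne j).$$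
   Context: These equations are the upper triangular reduction of the rank two Schlesinger system in which $u_1=0$ is fixed. The residue matrices are $A^{(i)}=\begin{pmatrix}\alpha_i & a_i\\ 0&-\alpha_i\end{pmatrix}$, and $A^{(\infty)}=\mathrm{diag}(\alpha_\infty,-\alpha_\infty)$. *)

theory Defs
  imports "HOL-Analysis.Analysis"
begin

text \<open>Parameters: a function u :: nat => complex, of which only the coordinates
  u 2, ..., u (2g+1) are used; the first branch point u_1 is fixed to 0.\<close>

definition branch :: "(nat \<Rightarrow> complex) \<Rightarrow> nat \<Rightarrow> complex" where
  "branch u i = (if i = 1 then 0 else u i)"

definition hyp_poly :: "nat \<Rightarrow> (nat \<Rightarrow> complex) \<Rightarrow> complex \<Rightarrow> complex" where
  "hyp_poly g u x = x * (\<Prod>i\<in>{2..2*g+1}. (x - u i))"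

text \<open>A closed cycle on the curve avoiding branch points and infinity: a closed
  piecewise-C1 path p in the u-plane avoiding the branch points, together with
  a continuous branch s of v along p that returns to its initial value.\<close>
definition lifted_cycle :: "nat \<Rightarrow> (nat \<Rightarrow> complex) \<Rightarrow> (real \<Rightarrow> complex) \<Rightarrow> (real \<Rightarrow> complex) \<Rightarrow> bool" where
  "lifted_cycle g u p s \<longleftrightarrow>
     valid_path p \<and> pathfinish p = pathstart p \<and>
     path_image p \<inter> branch u ` {1..2*g+1} = {} \<and>
     continuous_on {0..1} s \<and> s 1 = s 0 \<and>
     (\<forall>t\<in>{0..1}. (s t)\<^sup>2 = hyp_poly g u (p t))"

definition period :: "(real \<Rightarrow> complex) \<Rightarrow> (real \<Rightarrow> complex) \<Rightarrow> complex" where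
  "period p s = integral {0..1} (\<lambda>t. vector_derivative p (at t within {0..1}) / s t)"

definition period_pole :: "(real \<Rightarrow> complex) \<Rightarrow> (real \<Rightarrow> complex) \<Rightarrow> complex \<Rightarrow> complex" where
  "period_pole p s z = integral {0..1} (\<lambda>t. vector_derivative p (at t within {0..1}) / ((p t - z) * s t))"

definition acoef :: "nat \<Rightarrow> (nat \<Rightarrow> (nat \<Rightarrow> complex) \<Rightarrow> real \<Rightarrow> complex)
    \<Rightarrow> (nat \<Rightarrow> (nat \<Rightarrow> complex) \<Rightarrow> real \<Rightarrow> complex) \<Rightarrow> (nat \<Rightarrow> complex)
    \<Rightarrow> (nat \<Rightarrow> complex) \<Rightarrow> nat \<Rightarrow> complex" where
  "acoef g p s c u i =
     (if i = 1 then - (\<Sum>k\<in>{1..2*g}. c k * period (p k u) (s k u))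
      else (\<Sum>k\<in>{1..2*g}. c k * period (p k u) (s k u))
           + u i * (\<Sum>k\<in>{1..2*g}. c k * period_pole (p k u) (s k u) (u i)))"

definition alpha :: "nat \<Rightarrow> complex" where
  "alpha i = (if i = 1 then 1/4 else -1/4)"

definition alpha_inf :: "nat \<Rightarrow> complex" where
  "alpha_inf g = (2 * of_nat g - 1) / 4"

end

theory Submission
  imports Defs "HOL-Complex_Analysis.Cauchy_Integral_Theorem"
begin

(* Write P = \<oint> du/v and Q(z) = \<oint> du/((u - z) v), so that a\<^sub>1 = -P and a\<^sub>i = P + u\<^sub>i Q(u\<^sub>i).
   Moving u\<^sub>j changes 1/v by the factor \<surd>((u - u\<^sub>j)/(u - u\<^sub>j')), whence \<partial>\<^sub>j P = Q(u\<^sub>j)/2 and, by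
   partial fractions, \<partial>\<^sub>j Q(u\<^sub>i) = (Q(u\<^sub>i) - Q(u\<^sub>j))/(2(u\<^sub>i - u\<^sub>j)); the Schlesinger equations are then
   algebra. The relation \<Sum> a\<^sub>i = 0 reads (2g - 1) P + \<Sum> u\<^sub>i Q(u\<^sub>i) = 0, and holds because the
   integrand is d(-2u/v).
   Differentiation under the integral sign is justified by cutting the cycle into short pieces,
   each inside a disc where v is a holomorphic branch of the square root. For nearby positions of
   u\<^sub>j the moved cycle is followed by the deformed branches, and its integral equals that over the
   closed polygon through the nodes, which depends holomorphically on u\<^sub>j. *)

lemma continuous_square_roots_eq:
  fixes f g :: "'a::topological_space \<Rightarrow> complex"
  assumes S: "connected S" and cf: "continuous_on S f" and cg: "continuous_on S g"
    and nz: "\<forall>x\<in>S. g x \<noteq> 0" and sq: "\<forall>x\<in>S. (f x)^2 = (g x)^2"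
    and x0: "x0 \<in> S" "f x0 = g x0"
  shows "\<forall>x\<in>S. f x = g x"
proof -
  let ?k = "\<lambda>x. f x / g x"
  have ck: "continuous_on S ?k" using cf cg nz by (intro continuous_intros) auto
  have rng: "?k ` S \<subseteq> {1, -1}"
  proof
    fix y assume "y \<in> ?k ` S"
    then obtain x where x: "x \<in> S" "y = f x / g x" by auto
    have "y^2 = 1" using x sq nz by (simp add: power_divide)
    then show "y \<in> {1,-1}" by (simp add: power2_eq_1_iff)
  qed
  have "?k constant_on S"
    by (rule continuous_finite_range_constant[OF S ck]) (rule finite_subset[OF rng], simp)
  then obtain c where c: "\<forall>x\<in>S. ?k x = c" by (auto simp: constant_on_def)
  have "c = 1" using c x0 nz by auto
  then show ?thesis using c nz by auto
qed

lemma square_eq_imp_eq_if_sum_nonzero: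
  fixes a b :: complex
  assumes "a^2 = b^2" "a + b \<noteq> 0"
  shows "a = b"
proof -
  have "(a - b) * (a + b) = 0" using assms(1) by (simp add: algebra_simps power2_eq_square)
  then show "a = b" using assms(2) by simp
qed

lemma primitives_same_increment:
  fixes G1 G2 :: "complex \<Rightarrow> complex"
  assumes S: "convex S"
    and G1: "\<forall>x\<in>S. (G1 has_field_derivative q x) (at x)"
    and G2: "\<forall>x\<in>S. (G2 has_field_derivative q x) (at x)"
    and xy: "x \<in> S" "y \<in> S"
  shows "G1 x - G1 y = G2 x - G2 y"
proof -
  have "\<exists>c. \<forall>x\<in>S. G1 x - G2 x = c"
  proof (rule has_field_derivative_zero_constant[OF S])
    fix x assume "x \<in> S"
    then have "((\<lambda>x. G1 x - G2 x) has_field_derivative q x - q x) (at x)"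
      using G1 G2 by (intro derivative_intros) auto
    then show "((\<lambda>x. G1 x - G2 x) has_field_derivative 0) (at x within S)"
      by (auto intro: has_field_derivative_at_within)
  qed
  then obtain c where "\<forall>x\<in>S. G1 x - G2 x = c" by blast
  then have "G1 x - G2 x = G1 y - G2 y" using xy by auto
  then show ?thesis by (simp add: algebra_simps)
qed

lemma branch_primitives_same_increment:
  fixes f1 f2 G1 G2 h :: "complex \<Rightarrow> complex"
  assumes S: "convex S" and xy: "x \<in> S" "y \<in> S"
    and cont: "continuous_on S f1" "continuous_on S f2" and nz: "\<forall>z\<in>S. f2 z \<noteq> 0"
    and sq: "\<forall>z\<in>S. (f1 z)^2 = (f2 z)^2" and agree: "f1 x = f2 x"
    and G1: "\<forall>z\<in>S. (G1 has_field_derivative h z / f1 z) (at z)"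
    and G2: "\<forall>z\<in>S. (G2 has_field_derivative h z / f2 z) (at z)"
  shows "G1 x - G1 y = G2 x - G2 y"
proof (rule primitives_same_increment[OF S _ G2 xy])
  have "\<forall>z\<in>S. f1 z = f2 z"
    by (rule continuous_square_roots_eq[OF convex_connected[OF S] cont nz sq xy(1) agree])
  then show "\<forall>z\<in>S. (G1 has_field_derivative h z / f2 z) (at z)" using G1 by simp
qed

lemma holomorphic_on_ball_primitive:
  assumes "f holomorphic_on ball c r"
  shows "\<exists>G. \<forall>x\<in>ball c r. (G has_field_derivative f x) (at x)"
proof -
  obtain G where G: "\<And>x. x \<in> ball c r \<Longrightarrow> (G has_field_derivative f x) (at x within ball c r)"
    using holomorphic_convex_primitive'[OF convex_ball open_ball assms] by blast
  have "(G has_field_derivative f x) (at x)" if "x \<in> ball c r" for x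
    using G[OF that] at_within_open[OF that open_ball] by simp
  then show ?thesis by blast
qed

lemma contour_integral_linepath_in_ball:
  assumes c': "c' \<in> ball c r" and G: "\<forall>x\<in>ball c r. (G has_field_derivative F x) (at x)"
  shows "contour_integral (linepath c c') F = G c' - G c"
proof (rule contour_integral_unique)
  have "r > 0" using c' ball_eq_empty[of c r] by (metis empty_iff not_le)
  then have "path_image (linepath c c') \<subseteq> ball c r"
    unfolding path_image_linepath using c' by (intro closed_segment_subset) auto
  moreover have "\<And>x. x \<in> ball c r \<Longrightarrow> (G has_field_derivative F x) (at x within ball c r)"
    using G by (auto intro: has_field_derivative_at_within)
  ultimately show "(F has_contour_integral G c' - G c) (linepath c c')"
    using contour_integral_primitive[OF _ valid_path_linepath, of "ball c r" G] by simp
qed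

lemma has_integral_path_primitive:
  fixes \<eta> :: "real \<Rightarrow> complex"
  assumes vp: "valid_path \<eta>" and ab: "0 \<le> a" "a \<le> b" "b \<le> 1"
    and D: "open D" "\<eta> ` {a..b} \<subseteq> D" and F: "\<forall>x\<in>D. (F has_field_derivative q x) (at x)"
    and \<psi>: "\<forall>t\<in>{a..b}. \<psi> t = q (\<eta> t)"
  shows "((\<lambda>t. vector_derivative \<eta> (at t within {0..1}) * \<psi> t) has_integral F (\<eta> b) - F (\<eta> a)) {a..b}"
proof -
  obtain S where S: "finite S" "\<eta> C1_differentiable_on {0..1} - S" and ce: "continuous_on {0..1} \<eta>"
    using vp by (auto simp: valid_path_def piecewise_C1_differentiable_on_def)
  have "((\<lambda>t. vector_derivative \<eta> (at t within {0..1}) * \<psi> t) has_integral (F \<circ> \<eta>) b - (F \<circ> \<eta>) a) {a..b}"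
  proof (rule fundamental_theorem_of_calculus_interior_strong[OF S(1) ab(2)])
    fix x assume "x \<in> {a<..<b} - S"
    then have x: "a < x" "x < b" "x \<in> {0..1} - S" using ab by auto
    have vd: "(\<eta> has_vector_derivative vector_derivative \<eta> (at x)) (at x)"
      using S(2) x(3) by (auto simp: C1_differentiable_on_eq vector_derivative_works)
    have "\<eta> x \<in> D" using D(2) x by force
    then have "((F \<circ> \<eta>) has_vector_derivative (vector_derivative \<eta> (at x) * q (\<eta> x))) (at x)"
      using field_vector_diff_chain_at[OF vd] F by blast
    moreover have "vector_derivative \<eta> (at x within {0..1}) = vector_derivative \<eta> (at x)"
      using vector_derivative_at_within_ivl[OF vd, of 0 1] x by auto
    ultimately show "((F \<circ> \<eta>) has_vector_derivative vector_derivative \<eta> (at x within {0..1}) * \<psi> x) (at x)"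
      using \<psi> x by simp
  next
    have "continuous_on D F" using F
      by (meson DERIV_isCont continuous_at_imp_continuous_on)
    moreover have "continuous_on {a..b} \<eta>" using ab by (intro continuous_on_subset[OF ce]) auto
    ultimately show "continuous_on {a..b} (F \<circ> \<eta>)"
      unfolding o_def by (rule continuous_on_compose2[OF _ _ D(2)])
  qed
  then show ?thesis by simp
qed

lemma has_integral_uniform_subdivision:
  fixes \<phi> :: "real \<Rightarrow> complex"
  assumes N: "N > 0"
    and pieces: "\<And>m. m < N \<Longrightarrow> (\<phi> has_integral v m) {real m / N .. real (Suc m) / N}"
  shows "(\<phi> has_integral (\<Sum>m<N. v m)) {0..1}"
proof -
  have "k \<le> N \<Longrightarrow> (\<phi> has_integral (\<Sum>m<k. v m)) {0 .. real k / N}" for k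
  proof (induction k)
    case 0 then show ?case using has_integral_refl(1)[of \<phi> 0] by simp
  next
    case (Suc k)
    have "(\<phi> has_integral ((\<Sum>m<k. v m) + v k)) {0 .. real (Suc k) / N}"
      by (rule has_integral_combine[of _ "real k / N"])
         (use Suc N pieces in \<open>auto simp: divide_right_mono\<close>)
    then show ?case by simp
  qed
  from this[of N] N show ?thesis by simp
qed

lemma subdivision_node_in_unit_interval: "m \<le> N \<Longrightarrow> real m / real N \<in> {0..1}"
  by (auto simp: divide_le_eq_1)

lemma subdivision_piece_subset:
  assumes "m < N"
  shows "{real m / real N .. real (Suc m) / real N} \<subseteq> {0..1}"
proof -
  have "0 \<le> real m / real N" "real (Suc m) / real N \<le> 1"
    using assms by (auto simp: divide_le_eq_1)
  then show ?thesis by auto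
qed

lemma sum_increments_change_base:
  fixes G :: "nat \<Rightarrow> 'a \<Rightarrow> 'b::ab_group_add"
  assumes step: "\<And>m. m < N \<Longrightarrow>
      G m (T (Suc m)) - G m (c (Suc m)) = G (Suc m) (T (Suc m)) - G (Suc m) (c (Suc m))"
    and closed: "G N (T N) - G N (c N) = G 0 (T 0) - G 0 (c 0)"
  shows "(\<Sum>m<N. G m (T (Suc m)) - G m (T m)) = (\<Sum>m<N. G m (c (Suc m)) - G m (c m))"
proof -
  define E where "E m = G m (T m) - G m (c m)" for m
  have "(\<Sum>m<N. G m (T (Suc m)) - G m (T m)) = (\<Sum>m<N. (G m (c (Suc m)) - G m (c m)) + (E (Suc m) - E m))"
    using step unfolding E_def by (intro sum.cong) (auto simp: algebra_simps)
  also have "\<dots> = (\<Sum>m<N. G m (c (Suc m)) - G m (c m))"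
    unfolding sum.distrib sum_lessThan_telescope using closed unfolding E_def by simp
  finally show ?thesis .
qed

section \<open>Local branches of the square root\<close>

lemma ratio_notin_nonpos_Reals:
  fixes x c b :: complex
  assumes "norm (x - c) < norm (c - b)"
  shows "(x - b) / (c - b) \<notin> \<real>\<^sub>\<le>\<^sub>0"
proof -
  have cb: "c \<noteq> b" using assms by auto
  have eq: "(x - b) / (c - b) = 1 + (x - c) / (c - b)" using cb by (simp add: field_simps)
  have "norm ((x - c) / (c - b)) < 1" using assms cb by (simp add: norm_divide divide_less_eq)
  then have "\<bar>Re ((x - c) / (c - b))\<bar> < 1" using abs_Re_le_cmod[of "(x - c) / (c - b)"] by linarith
  then have "Re ((x - b) / (c - b)) > 0" unfolding eq by simp
  then show ?thesis by (auto simp: complex_nonpos_Reals_iff)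
qed

lemma moved_ratio_notin_nonpos_Reals:
  fixes x z w :: complex
  assumes "norm (z - w) < norm (x - w)"
  shows "(x - z) / (x - w) \<notin> \<real>\<^sub>\<le>\<^sub>0" "x \<noteq> z" "x \<noteq> w"
proof -
  have "(z - x) / (w - x) \<notin> \<real>\<^sub>\<le>\<^sub>0"
    using assms by (intro ratio_notin_nonpos_Reals) (simp add: norm_minus_commute)
  moreover have "(z - x) / (w - x) = (x - z) / (x - w)" by (metis minus_diff_eq minus_divide_divide)
  ultimately show "(x - z) / (x - w) \<notin> \<real>\<^sub>\<le>\<^sub>0" by simp
  show "x \<noteq> z" "x \<noteq> w" using assms by auto
qed

lemma ball_far_from:
  assumes "x \<in> ball c r" "2 * r \<le> norm (c - b)"
  shows "r < norm (x - b)"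
proof -
  have "norm (c - b) \<le> norm (c - x) + norm (x - b)" using norm_triangle_ineq[of "c - x" "x - b"] by simp
  moreover have "norm (c - x) < r" using assms(1) by (simp add: dist_norm)
  ultimately show ?thesis using assms(2) by linarith
qed

lemma csqrt_ratio_has_field_derivative:
  fixes x c b :: complex
  assumes "(x - b) / (c - b) \<notin> \<real>\<^sub>\<le>\<^sub>0" "c \<noteq> b"
  shows "((\<lambda>x. csqrt ((x - b) / (c - b))) has_field_derivative
           1 / (c - b) / (2 * csqrt ((x - b) / (c - b)))) (at x)"
  by (rule has_field_derivative_csqrt'[where f="\<lambda>x. (x - b) / (c - b)", OF _ assms(1)])
     (use assms(2) in \<open>auto intro!: derivative_eq_intros\<close>)

lemma
  fixes x c b :: complex
  assumes "x \<in> ball c r" "r \<le> norm (c - b)"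
  shows ratio_in_ball_notin_nonpos_Reals: "(x - b) / (c - b) \<notin> \<real>\<^sub>\<le>\<^sub>0"
    and centre_ne_far_point: "c \<noteq> b"
proof -
  have "norm (x - c) < norm (c - b)" using assms by (simp add: dist_norm norm_minus_commute)
  then show "(x - b) / (c - b) \<notin> \<real>\<^sub>\<le>\<^sub>0" by (rule ratio_notin_nonpos_Reals)
  have "0 \<le> dist c x" "dist c x < r" using assms(1) by auto
  then have "0 < r" by linarith
  then show "c \<noteq> b" using assms(2) by auto
qed

text \<open>A branch of \<open>\<surd>(\<Prod>i\<in>I. x - b i)\<close> on a disc around \<open>c\<close> avoiding the \<open>b i\<close>,
  provided \<open>a\<^sup>2 = (\<Prod>i\<in>I. c - b i)\<close>.\<close>
definition local_sqrt :: "(nat \<Rightarrow> complex) \<Rightarrow> nat set \<Rightarrow> complex \<Rightarrow> complex \<Rightarrow> complex \<Rightarrow> complex" where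
  "local_sqrt b I c a x = a * (\<Prod>i\<in>I. csqrt ((x - b i) / (c - b i)))"

lemma local_sqrt_has_field_derivative:
  assumes "finite I" "\<forall>i\<in>I. r \<le> norm (c - b i)" "x \<in> ball c r"
  shows "(local_sqrt b I c a has_field_derivative
           local_sqrt b I c a x * (\<Sum>i\<in>I. 1 / (2 * (x - b i)))) (at x)"
proof -
  define q where "q i = csqrt ((x - b i) / (c - b i))" for i
  have ng: "(x - b i) / (c - b i) \<notin> \<real>\<^sub>\<le>\<^sub>0" "c \<noteq> b i" if "i \<in> I" for i
    using assms(2,3) that ratio_in_ball_notin_nonpos_Reals centre_ne_far_point by blast+
  have nz: "q i \<noteq> 0" "x \<noteq> b i" if "i \<in> I" for i
    using ng[OF that] unfolding q_def by auto
  have "((\<lambda>x. \<Prod>i\<in>I. csqrt ((x - b i) / (c - b i))) has_field_derivative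
       (\<Prod>i\<in>I. q i) * (\<Sum>i\<in>I. 1 / (c - b i) / (2 * q i) / q i)) (at x)"
  proof -
    have "((\<lambda>x. csqrt ((x - b i) / (c - b i))) has_field_derivative 1 / (c - b i) / (2 * q i)) (at x)"
      if "i \<in> I" for i
      using csqrt_ratio_has_field_derivative[OF ng[OF that]] unfolding q_def .
    then show ?thesis
      using has_field_derivative_prod'[of I "\<lambda>i x. csqrt ((x - b i) / (c - b i))" x
          "\<lambda>i. 1 / (c - b i) / (2 * q i)"] nz(1) unfolding q_def by simp
  qed
  then have D: "(local_sqrt b I c a has_field_derivative
       a * ((\<Prod>i\<in>I. q i) * (\<Sum>i\<in>I. 1 / (c - b i) / (2 * q i) / q i))) (at x)"
    unfolding local_sqrt_def[abs_def] by (rule DERIV_cmult)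
  have "1 / (c - b i) / (2 * q i) / q i = 1 / (2 * (x - b i))" if i: "i \<in> I" for i
  proof -
    have "q i * q i = (x - b i) / (c - b i)" unfolding q_def by (metis power2_csqrt power2_eq_square)
    then have "(c - b i) * (q i * q i) = x - b i" using ng(2)[OF i] by (simp add: field_simps)
    moreover have "1 / (c - b i) / (2 * q i) / q i = 1 / (2 * ((c - b i) * (q i * q i)))"
      using ng(2)[OF i] nz[OF i] by (simp add: field_simps)
    ultimately show ?thesis by simp
  qed
  then have S: "(\<Sum>i\<in>I. 1 / (c - b i) / (2 * q i) / q i) = (\<Sum>i\<in>I. 1 / (2 * (x - b i)))"
    by (rule sum.cong[OF refl])
  have "local_sqrt b I c a x = a * (\<Prod>i\<in>I. q i)" unfolding local_sqrt_def q_def ..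
  with D S show ?thesis by (simp add: mult.assoc)
qed

lemma local_sqrt_holomorphic:
  assumes "finite I" "\<forall>i\<in>I. r \<le> norm (c - b i)"
  shows "local_sqrt b I c a holomorphic_on ball c r"
  unfolding holomorphic_on_def field_differentiable_def
  using local_sqrt_has_field_derivative[OF assms] has_field_derivative_at_within by blast

lemma local_sqrt_nonzero:
  assumes "finite I" "\<forall>i\<in>I. r \<le> norm (c - b i)" "a \<noteq> 0" "x \<in> ball c r"
  shows "local_sqrt b I c a x \<noteq> 0"
proof -
  have "(x - b i) / (c - b i) \<noteq> 0" if "i \<in> I" for i
    using ratio_in_ball_notin_nonpos_Reals[OF assms(4)] assms(2) that by fastforce
  then show ?thesis using assms(1,3) unfolding local_sqrt_def by simp
qed

lemma local_sqrt_square: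
  assumes "finite I" "\<forall>i\<in>I. r \<le> norm (c - b i)" "x \<in> ball c r" "a^2 = (\<Prod>i\<in>I. c - b i)"
  shows "(local_sqrt b I c a x)^2 = (\<Prod>i\<in>I. x - b i)"
proof -
  have cb: "\<forall>i\<in>I. c - b i \<noteq> 0" using centre_ne_far_point[OF assms(3)] assms(2) by auto
  have "(local_sqrt b I c a x)^2 = a^2 * (\<Prod>i\<in>I. (csqrt ((x - b i) / (c - b i)))^2)"
    unfolding local_sqrt_def by (simp add: power_mult_distrib prod_power_distrib)
  also have "\<dots> = a^2 * (\<Prod>i\<in>I. (x - b i) / (c - b i))" by simp
  also have "\<dots> = (\<Prod>i\<in>I. x - b i)"
    using assms(1,4) cb by (simp add: prod_dividef)
  finally show ?thesis .
qed

lemma local_sqrt_centre: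
  assumes "\<forall>i\<in>I. c \<noteq> b i"
  shows "local_sqrt b I c a c = a"
  using assms unfolding local_sqrt_def by simp

lemma hyp_log_derivative_identity:
  fixes u :: "nat \<Rightarrow> complex" and x :: complex
  assumes x0: "x \<noteq> 0" and xu: "\<forall>i\<in>{2..2*g+1}. x \<noteq> u i"
  shows "-2 + 2 * x * (\<Sum>i\<in>{1..2*g+1}. 1 / (2 * (x - branch u i))) =
         (2 * of_nat g - 1) + (\<Sum>i\<in>{2..2*g+1}. u i / (x - u i))"
proof -
  have I: "{1..2*g+1} = insert 1 {2..2*g+1}" by auto
  have "2 * x * (\<Sum>i\<in>{1..2*g+1}. 1 / (2 * (x - branch u i))) = (\<Sum>i\<in>{1..2*g+1}. x / (x - branch u i))"
    unfolding sum_distrib_left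
  proof (rule sum.cong)
    fix i show "2 * x * (1 / (2 * (x - branch u i))) = x / (x - branch u i)"
      by (cases "x = branch u i") (auto simp: field_simps)
  qed simp
  also have "\<dots> = 1 + (\<Sum>i\<in>{2..2*g+1}. x / (x - u i))"
    unfolding I using x0 by (simp add: branch_def)
  also have "(\<Sum>i\<in>{2..2*g+1}. x / (x - u i)) = (\<Sum>i\<in>{2..2*g+1}. 1 + u i / (x - u i))"
    by (rule sum.cong) (use xu in \<open>auto simp: field_simps\<close>)
  also have "\<dots> = of_nat (2*g) + (\<Sum>i\<in>{2..2*g+1}. u i / (x - u i))"
    by (simp add: sum.distrib)
  finally show ?thesis by simp
qed

lemma local_sqrt_exact_primitive:
  fixes u :: "nat \<Rightarrow> complex" and g :: nat and c a :: complex
  defines "F \<equiv> local_sqrt (branch u) {1..2*g+1} c a"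
  assumes far: "\<forall>i\<in>{1..2*g+1}. r \<le> norm (c - branch u i)" and a: "a \<noteq> 0" and x: "x \<in> ball c r"
  shows "((\<lambda>x. - 2 * x / F x) has_field_derivative
           ((2 * of_nat g - 1) + (\<Sum>i\<in>{2..2*g+1}. u i / (x - u i))) / F x) (at x)"
proof -
  define S where "S = (\<Sum>i\<in>{1..2*g+1}. 1 / (2 * (x - branch u i)))"
  have Fd: "(F has_field_derivative F x * S) (at x)"
    unfolding F_def S_def by (rule local_sqrt_has_field_derivative[OF _ far x]) simp
  have Fnz: "F x \<noteq> 0" unfolding F_def by (rule local_sqrt_nonzero[OF _ far a x]) simp
  have xb: "x \<noteq> branch u i" if "i \<in> {1..2*g+1}" for i
    using ratio_in_ball_notin_nonpos_Reals[OF x, of "branch u i"] far that by fastforce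
  have x0: "x \<noteq> 0" using xb[of 1] by (simp add: branch_def)
  have xu: "\<forall>i\<in>{2..2*g+1}. x \<noteq> u i"
  proof
    fix i assume "i \<in> {2..2*g+1}"
    then show "x \<noteq> u i" using xb[of i] by (simp add: branch_def)
  qed
  have D: "((\<lambda>x. - 2 * x / F x) has_field_derivative
          ((- 2) * F x - (- 2 * x) * (F x * S)) / (F x * F x)) (at x)"
    using DERIV_divide[OF DERIV_cmult[OF DERIV_ident, of "-2"] Fd] Fnz by simp
  have "((- 2) * F x - (- 2 * x) * (F x * S)) / (F x * F x) = (-2 + 2 * x * S) / F x"
    using Fnz by (simp add: field_simps)
  also have "-2 + 2 * x * S = (2 * of_nat g - 1) + (\<Sum>i\<in>{2..2*g+1}. u i / (x - u i))"
    unfolding S_def by (rule hyp_log_derivative_identity[OF x0 xu])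
  finally show ?thesis using D by simp
qed

text \<open>The branch obtained from \<open>local_sqrt\<close> when the branch point \<open>b j\<close> moves to \<open>z\<close>.\<close>
definition deformed_sqrt ::
    "(nat \<Rightarrow> complex) \<Rightarrow> nat set \<Rightarrow> complex \<Rightarrow> complex \<Rightarrow> nat \<Rightarrow> complex \<Rightarrow> complex \<Rightarrow> complex" where
  "deformed_sqrt b I c a j z x = local_sqrt b I c a x * csqrt ((x - z) / (x - b j))"

lemma moved_point_ratio_in_ball:
  fixes x c w z :: complex
  assumes "x \<in> ball c r" "2 * r \<le> norm (c - w)" "dist z w < r"
  shows "(x - z) / (x - w) \<notin> \<real>\<^sub>\<le>\<^sub>0" "x \<noteq> z" "x \<noteq> w"
proof -
  have "norm (z - w) < norm (x - w)"
    using ball_far_from[OF assms(1,2)] assms(3) by (simp add: dist_norm)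
  then show "(x - z) / (x - w) \<notin> \<real>\<^sub>\<le>\<^sub>0" "x \<noteq> z" "x \<noteq> w"
    by (rule moved_ratio_notin_nonpos_Reals)+
qed

lemma csqrt_moved_ratio_holomorphic:
  assumes "\<And>x. x \<in> S \<Longrightarrow> (x - z) / (x - w) \<notin> \<real>\<^sub>\<le>\<^sub>0 \<and> x \<noteq> w"
  shows "(\<lambda>x. csqrt ((x - z) / (x - w))) holomorphic_on S"
proof -
  have "(\<lambda>x. csqrt ((x - z) / (x - w))) field_differentiable at x" if x: "x \<in> S" for x
  proof -
    have "((\<lambda>x. csqrt ((x - z) / (x - w))) has_field_derivative
            ((x - w - (x - z)) / (x - w)^2) / (2 * csqrt ((x - z) / (x - w)))) (at x)"
      by (rule has_field_derivative_csqrt'[where f="\<lambda>x. (x - z) / (x - w)"])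
         (use assms[OF x] in \<open>auto intro!: derivative_eq_intros simp: power2_eq_square\<close>)
    then show ?thesis unfolding field_differentiable_def by blast
  qed
  then show ?thesis by (simp add: holomorphic_on_def field_differentiable_at_within)
qed

lemma half_far_imp_far:
  assumes "\<forall>i\<in>I. 2 * r \<le> norm (c - b i)"
  shows "\<forall>i\<in>I. r \<le> norm (c - b i)"
proof
  fix i assume "i \<in> I"
  then have "2 * r \<le> norm (c - b i)" using assms by blast
  moreover have "0 \<le> norm (c - b i)" by simp
  ultimately show "r \<le> norm (c - b i)" by linarith
qed

context
  fixes b :: "nat \<Rightarrow> complex" and I j c r z
  assumes I: "finite I" "j \<in> I"
    and far: "\<forall>i\<in>I. 2 * r \<le> norm (c - b i)"
    and z: "dist z (b j) < r"
begin

lemma deformed_sqrt_holomorphic: "deformed_sqrt b I c a j z holomorphic_on ball c r"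
  unfolding deformed_sqrt_def[abs_def]
  using moved_point_ratio_in_ball far I z
  by (intro holomorphic_on_mult local_sqrt_holomorphic[OF I(1) half_far_imp_far[OF far]]
        csqrt_moved_ratio_holomorphic) blast

lemma deformed_sqrt_nonzero:
  assumes "a \<noteq> 0" "x \<in> ball c r"
  shows "deformed_sqrt b I c a j z x \<noteq> 0"
  using local_sqrt_nonzero[OF I(1) half_far_imp_far[OF far] assms]
    moved_point_ratio_in_ball[OF assms(2) _ z] far I(2)
  unfolding deformed_sqrt_def by auto

lemma deformed_sqrt_square:
  assumes "x \<in> ball c r" "a^2 = (\<Prod>i\<in>I. c - b i)"
  shows "(deformed_sqrt b I c a j z x)^2 = (\<Prod>i\<in>I. x - (b(j := z)) i)"
proof -
  have xbj: "x \<noteq> b j" using moved_point_ratio_in_ball[OF assms(1) _ z] far I(2) by auto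
  have "(deformed_sqrt b I c a j z x)^2 = (\<Prod>i\<in>I. x - b i) * ((x - z) / (x - b j))"
    unfolding deformed_sqrt_def
    using local_sqrt_square[OF I(1) half_far_imp_far[OF far] assms] by (simp add: power_mult_distrib)
  also have "\<dots> = (x - z) * (\<Prod>i\<in>I - {j}. x - b i)"
    using xbj by (simp add: prod.remove[OF I])
  also have "\<dots> = (\<Prod>i\<in>I. x - (b(j := z)) i)"
    by (simp add: prod.remove[OF I])
  finally show ?thesis .
qed

end

lemma deformed_sqrt_unmoved:
  "x \<noteq> b j \<Longrightarrow> deformed_sqrt b I c a j (b j) x = local_sqrt b I c a x"
  unfolding deformed_sqrt_def by simp

lemma inverse_csqrt_moved_ratio_has_field_derivative:
  fixes x z w :: complex
  assumes ratio: "(x - z) / (x - w) \<notin> \<real>\<^sub>\<le>\<^sub>0" and "x \<noteq> z" "x \<noteq> w"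
  shows "((\<lambda>z. 1 / csqrt ((x - z) / (x - w))) has_field_derivative
           1 / (2 * (x - z)) / csqrt ((x - z) / (x - w))) (at z)"
proof -
  define q where "q = csqrt ((x - z) / (x - w))"
  have qq: "q * q = (x - z) / (x - w)" unfolding q_def by (metis power2_csqrt power2_eq_square)
  have q0: "q \<noteq> 0" using ratio unfolding q_def by auto
  have "((\<lambda>z. x - z) has_field_derivative -1) (at z)" by (auto intro!: derivative_eq_intros)
  then have "((\<lambda>z. (x - z) / (x - w)) has_field_derivative -1 / (x - w)) (at z)"
    by (rule DERIV_cdivide)
  from has_field_derivative_csqrt'[OF this ratio]
  have D: "((\<lambda>z. 1 / csqrt ((x - z) / (x - w))) has_field_derivative
          (0 * q - 1 * (-1 / (x - w) / (2 * q))) / (q * q)) (at z)"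
    unfolding q_def by (rule DERIV_divide[OF DERIV_const]) (use q0 in \<open>simp add: q_def\<close>)
  have "(0 * q - 1 * (-1 / (x - w) / (2 * q))) / (q * q) = 1 / (2 * ((x - w) * (q * q)) * q)"
    using q0 assms(3) by (simp add: field_simps)
  also have "(x - w) * (q * q) = x - z" using qq assms(3) by (simp add: field_simps)
  also have "1 / (2 * (x - z) * q) = 1 / (2 * (x - z)) / q" by simp
  finally have V: "(0 * q - 1 * (-1 / (x - w) / (2 * q))) / (q * q) = 1 / (2 * (x - z)) / q" .
  show ?thesis using D[unfolded V] unfolding q_def .
qed

definition lifted_integrand ::
    "(complex \<Rightarrow> complex) \<Rightarrow> (real \<Rightarrow> complex) \<Rightarrow> (real \<Rightarrow> complex) \<Rightarrow> real \<Rightarrow> complex" where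
  "lifted_integrand h q w t = vector_derivative q (at t within {0..1}) * (h (q t) / w t)"

definition lifted_integral ::
    "(complex \<Rightarrow> complex) \<Rightarrow> (real \<Rightarrow> complex) \<Rightarrow> (real \<Rightarrow> complex) \<Rightarrow> complex" where
  "lifted_integral h q w = integral {0..1} (lifted_integrand h q w)"

lemma lifted_integrand_add:
  "lifted_integrand (\<lambda>x. h1 x + h2 x) q w t = lifted_integrand h1 q w t + lifted_integrand h2 q w t"
  unfolding lifted_integrand_def by (simp add: add_divide_distrib distrib_left)

lemma lifted_integrand_diff:
  "lifted_integrand (\<lambda>x. h1 x - h2 x) q w t = lifted_integrand h1 q w t - lifted_integrand h2 q w t"
  unfolding lifted_integrand_def by (simp add: diff_divide_distrib right_diff_distrib)

lemma lifted_integrand_cmult: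
  "lifted_integrand (\<lambda>x. a * h x) q w t = a * lifted_integrand h q w t"
  unfolding lifted_integrand_def by simp

lemma lifted_integrand_sum:
  "lifted_integrand (\<lambda>x. \<Sum>i\<in>I. h i x) q w t = (\<Sum>i\<in>I. lifted_integrand (h i) q w t)"
  unfolding lifted_integrand_def by (simp add: sum_divide_distrib sum_distrib_left)

lemma lifted_integral_cong:
  assumes "\<And>t. t \<in> {0..1} \<Longrightarrow> h1 (q t) = h2 (q t)"
  shows "lifted_integral h1 q w = lifted_integral h2 q w"
  unfolding lifted_integral_def lifted_integrand_def using assms by (intro integral_cong) auto

lemma lifted_integral_cmult: "lifted_integral (\<lambda>x. a * h x) q w = a * lifted_integral h q w"
  unfolding lifted_integral_def lifted_integrand_cmult by (rule integral_mult_right)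

lemma period_eq_lifted_integral: "period q w = lifted_integral (\<lambda>_. 1) q w"
  unfolding period_def lifted_integral_def lifted_integrand_def by simp

lemma period_pole_eq_lifted_integral: "period_pole q w z = lifted_integral (\<lambda>x. 1 / (x - z)) q w"
  unfolding period_pole_def lifted_integral_def lifted_integrand_def by (simp add: field_simps)

lemma partial_fractions_two_poles:
  fixes a b :: complex
  assumes "a \<noteq> 0" "b \<noteq> 0" "a \<noteq> b"
  shows "1 / a / (2 * b) = 1 / (2 * (b - a)) * (1 / a - 1 / b)"
proof -
  have "b - a \<noteq> 0" using assms by simp
  then have "1 / (2 * (b - a)) * (1 / a - 1 / b) = 1 / (2 * (b - a)) * ((b - a) / (a * b))"
    using assms by (simp add: diff_frac_eq)
  also have "\<dots> = 1 / a / (2 * b)" using \<open>b - a \<noteq> 0\<close> assms by (simp add: field_simps)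
  finally show ?thesis ..
qed

definition chain_integral ::
    "nat \<Rightarrow> (nat \<Rightarrow> complex) \<Rightarrow> (nat \<Rightarrow> complex \<Rightarrow> complex) \<Rightarrow> (complex \<Rightarrow> complex) \<Rightarrow> complex" where
  "chain_integral N c f h = (\<Sum>m<N. contour_integral (linepath (c m) (c (Suc m))) (\<lambda>x. h x / f m x))"

text \<open>A closed lifted path that is followed, piece by piece, by local branches \<open>f m\<close> of
  one square root on discs \<open>ball (c m) r\<close> can be replaced by the closed polygon through the
  centres: on overlapping discs the branches agree, so the primitives of \<open>h / f m\<close> glue.\<close>
lemma has_integral_lifted_chain:
  fixes \<eta> \<tau> :: "real \<Rightarrow> complex" and c :: "nat \<Rightarrow> complex" and f :: "nat \<Rightarrow> complex \<Rightarrow> complex"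
    and h Q :: "complex \<Rightarrow> complex"
  assumes N: "N > 0" and r: "r > 0" and vp: "valid_path \<eta>"
    and closed: "\<eta> 1 = \<eta> 0" "\<tau> 1 = \<tau> 0" "c N = c 0" "f N = f 0"
    and fh: "\<And>m. m \<le> N \<Longrightarrow> f m holomorphic_on ball (c m) r"
    and fnz: "\<And>m x. m \<le> N \<Longrightarrow> x \<in> ball (c m) r \<Longrightarrow> f m x \<noteq> 0"
    and fsq: "\<And>m x. m \<le> N \<Longrightarrow> x \<in> ball (c m) r \<Longrightarrow> (f m x)^2 = Q x"
    and hh: "\<And>m. m \<le> N \<Longrightarrow> h holomorphic_on ball (c m) r"
    and cc: "\<And>m. m < N \<Longrightarrow> c (Suc m) \<in> ball (c m) r"
    and follows: "\<And>m t. m < N \<Longrightarrow> t \<in> {real m / N .. real (Suc m) / N} \<Longrightarrow>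
                    \<eta> t \<in> ball (c m) r \<and> \<tau> t = f m (\<eta> t)"
  shows "(lifted_integrand h \<eta> \<tau> has_integral chain_integral N c f h) {0..1}"
proof -
  have "\<exists>G. \<forall>x\<in>ball (c m) r. (G has_field_derivative h x / f m x) (at x)" if "m \<le> N" for m
    using fh[OF that] hh[OF that] fnz[OF that]
    by (intro holomorphic_on_ball_primitive holomorphic_intros) auto
  then obtain G where G: "\<And>m. m \<le> N \<Longrightarrow> \<forall>x\<in>ball (c m) r. (G m has_field_derivative h x / f m x) (at x)"
    by metis
  define T where "T m = \<eta> (real m / N)" for m
  have T: "T m \<in> ball (c m) r \<and> \<tau> (real m / N) = f m (T m)" if "m \<le> N" for m
  proof (cases "m < N")
    case True
    have "real m / N \<in> {real m / N .. real (Suc m) / N}" using N by (auto simp: divide_right_mono)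
    then show ?thesis using follows[OF True] unfolding T_def by blast
  next
    case False
    have "0 \<in> {real 0 / N .. real (Suc 0) / N}" using N by auto
    then have "T 0 \<in> ball (c 0) r \<and> \<tau> 0 = f 0 (T 0)" using follows[OF N, of 0] unfolding T_def by simp
    moreover have "m = N" using that False by simp
    ultimately show ?thesis using closed N unfolding T_def by simp
  qed
  have grid: "0 \<le> real m / N" "real m / N \<le> real (Suc m) / N" for m
    using N by (auto simp: divide_right_mono)
  have grid_le_1: "real (Suc m) / N \<le> 1" if "m < N" for m
    using N that by (auto simp: divide_le_eq_1)
  have piece: "(lifted_integrand h \<eta> \<tau> has_integral G m (T (Suc m)) - G m (T m))
                 {real m / N .. real (Suc m) / N}" if m: "m < N" for m
    unfolding T_def lifted_integrand_def
  proof (rule has_integral_path_primitive[OF vp grid grid_le_1[OF m] open_ball])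
    show "\<eta> ` {real m / N .. real (Suc m) / N} \<subseteq> ball (c m) r" using follows[OF m] by blast
    show "\<forall>x\<in>ball (c m) r. (G m has_field_derivative h x / f m x) (at x)" using G m by simp
    show "\<forall>t\<in>{real m / N .. real (Suc m) / N}. h (\<eta> t) / \<tau> t = h (\<eta> t) / f m (\<eta> t)"
      using follows[OF m] by simp
  qed
  have chord: "contour_integral (linepath (c m) (c (Suc m))) (\<lambda>x. h x / f m x)
                 = G m (c (Suc m)) - G m (c m)" if m: "m < N" for m
    using contour_integral_linepath_in_ball[OF cc[OF m]] G m by simp
  have overlap: "G m (T (Suc m)) - G m (c (Suc m)) = G (Suc m) (T (Suc m)) - G (Suc m) (c (Suc m))"
    if m: "m < N" for m
  proof -
    define S where "S = ball (c m) r \<inter> ball (c (Suc m)) r"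
    have T1: "T (Suc m) \<in> ball (c m) r \<and> \<tau> (real (Suc m) / N) = f m (T (Suc m))"
      using follows[OF m, of "real (Suc m) / N"] grid(2)[of m] unfolding T_def by auto
    have T2: "T (Suc m) \<in> ball (c (Suc m)) r \<and> \<tau> (real (Suc m) / N) = f (Suc m) (T (Suc m))"
      using T[of "Suc m"] m by simp
    have TS: "T (Suc m) \<in> S" using T1 T2 unfolding S_def by auto
    have cS: "c (Suc m) \<in> S" using cc[OF m] r unfolding S_def by auto
    show ?thesis
    proof (rule branch_primitives_same_increment[OF _ TS cS])
      show "convex S" unfolding S_def by (auto intro: convex_Int)
      show "continuous_on S (f m)" "continuous_on S (f (Suc m))"
        using fh[of m] fh[of "Suc m"] m unfolding S_def
        by (auto intro: holomorphic_on_imp_continuous_on holomorphic_on_subset)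
      show "\<forall>x\<in>S. f (Suc m) x \<noteq> 0" using fnz[of "Suc m"] m unfolding S_def by auto
      show "\<forall>x\<in>S. (f m x)^2 = (f (Suc m) x)^2" using fsq[of m] fsq[of "Suc m"] m unfolding S_def by auto
      show "f m (T (Suc m)) = f (Suc m) (T (Suc m))" using T1 T2 by simp
      show "\<forall>x\<in>S. (G m has_field_derivative h x / f m x) (at x)"
        "\<forall>x\<in>S. (G (Suc m) has_field_derivative h x / f (Suc m) x) (at x)"
        using G[of m] G[of "Suc m"] m unfolding S_def by auto
    qed
  qed
  have closed_base: "G N (T N) - G N (c N) = G 0 (T 0) - G 0 (c 0)"
  proof -
    have T0: "T N = T 0" "T 0 \<in> ball (c 0) r" using T[of 0] closed(1) N unfolding T_def by auto
    have "G N (T 0) - G N (c 0) = G 0 (T 0) - G 0 (c 0)"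
      by (rule primitives_same_increment[of "ball (c 0) r"]) (use G[of N] G[of 0] closed r T0 in auto)
    then show ?thesis using T0 closed(3) by simp
  qed
  have "(\<Sum>m<N. G m (T (Suc m)) - G m (T m)) = (\<Sum>m<N. G m (c (Suc m)) - G m (c m))"
    by (rule sum_increments_change_base[OF overlap closed_base])
  also have "\<dots> = chain_integral N c f h"
    unfolding chain_integral_def by (rule sum.cong) (simp_all add: chord)
  finally show ?thesis using has_integral_uniform_subdivision[OF N piece] by simp
qed

section \<open>Differentiation under the integral sign\<close>

lemma contour_integral_linepath_has_field_derivative_param:
  fixes K Kx :: "complex \<Rightarrow> complex \<Rightarrow> complex" and a b u0 :: complex and R :: real
  assumes R: "R > 0" and seg: "closed_segment a b \<subseteq> D"
    and dK: "\<And>z x. z \<in> ball u0 R \<Longrightarrow> x \<in> D \<Longrightarrow> ((\<lambda>z. K z x) has_field_derivative Kx z x) (at z)"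
    and cK: "continuous_on (ball u0 R \<times> D) (\<lambda>q. K (fst q) (snd q))"
    and cKx: "continuous_on (ball u0 R \<times> D) (\<lambda>q. Kx (fst q) (snd q))"
  shows "((\<lambda>z. contour_integral (linepath a b) (K z)) has_field_derivative
           contour_integral (linepath a b) (Kx u0)) (at u0)"
proof -
  define L where "L = linepath a b"
  have L_in: "L t \<in> D" if "t \<in> {0..1}" for t
    using seg that linepath_image_01[of a b] unfolding L_def by blast
  have "continuous_on (ball u0 R \<times> {0..1}) (\<lambda>q. L (snd q))"
    unfolding L_def by (rule continuous_on_compose2[OF continuous_on_linepath[of UNIV] continuous_on_snd]) auto
  then have cpair: "continuous_on (ball u0 R \<times> {0..1}) (\<lambda>q. (fst q, L (snd q)))"
    using continuous_on_Pair[OF continuous_on_fst[OF continuous_on_id]] by simp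
  have ipair: "(\<lambda>q. (fst q, L (snd q))) ` (ball u0 R \<times> {0..1}) \<subseteq> ball u0 R \<times> D"
    using L_in by auto
  have param: "continuous_on (ball u0 R \<times> {0..1}) (\<lambda>q. M (fst q) (L (snd q)) * (b - a))"
    if "continuous_on (ball u0 R \<times> D) (\<lambda>q. M (fst q) (snd q))" for M
  proof -
    have "continuous_on (ball u0 R \<times> {0..1}) (\<lambda>q. M (fst q) (L (snd q)))"
      using continuous_on_compose2[OF that cpair ipair] by simp
    then show ?thesis by (rule continuous_on_mult_right)
  qed
  have CI: "contour_integral L (M z) = integral (cbox 0 1) (\<lambda>t. M z (L t) * (b - a))" for M z
    unfolding contour_integral_integral L_def cbox_interval vector_derivative_linepath_at ..
  have "((\<lambda>z. integral (cbox 0 1) (\<lambda>t. K z (L t) * (b - a))) has_field_derivative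
          integral (cbox 0 1) (\<lambda>t. Kx u0 (L t) * (b - a))) (at u0 within ball u0 R)"
  proof (rule leibniz_rule_field_derivative[OF _ _ _ _ convex_ball])
    fix z t assume z: "z \<in> ball u0 R" and t: "t \<in> cbox 0 (1::real)"
    show "((\<lambda>z. K z (L t) * (b - a)) has_field_derivative Kx z (L t) * (b - a)) (at z within ball u0 R)"
    proof -
      have "L t \<in> D" using L_in t by simp
      from DERIV_cmult_right[OF dK[OF z this], of "b - a"] show ?thesis
        by (rule has_field_derivative_at_within)
    qed
  next
    fix z assume z: "z \<in> ball u0 R"
    have cz: "continuous_on {0..1} (\<lambda>t::real. (z, t))" by (intro continuous_intros)
    have iz: "(\<lambda>t. (z, t)) ` {0..1} \<subseteq> ball u0 R \<times> {0..1}" using z by auto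
    have "continuous_on {0..1} (\<lambda>t. K z (L t) * (b - a))"
      using continuous_on_compose2[OF param[OF cK] cz iz] by simp
    then show "(\<lambda>t. K z (L t) * (b - a)) integrable_on cbox 0 1"
      by (simp add: integrable_continuous_interval)
  next
    show "continuous_on (ball u0 R \<times> cbox 0 1) (\<lambda>(z, t). Kx z (L t) * (b - a))"
      using param[OF cKx] by (simp add: split_beta)
  qed (use R in simp)
  moreover have "at u0 within ball u0 R = at u0" using R by (intro at_within_open) auto
  ultimately show ?thesis unfolding L_def[symmetric] CI by (simp only:)
qed

lemma chord_integral_deformed_sqrt_has_field_derivative:
  fixes b :: "nat \<Rightarrow> complex"
  assumes I: "finite I" "j \<in> I" and far: "\<forall>i\<in>I. 2 * r \<le> norm (c - b i)" and a: "a \<noteq> 0"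
    and hh: "h holomorphic_on ball c r" and c': "c' \<in> ball c r"
  shows "((\<lambda>z. contour_integral (linepath c c') (\<lambda>x. h x / deformed_sqrt b I c a j z x))
           has_field_derivative
           contour_integral (linepath c c') (\<lambda>x. h x / (2 * (x - b j)) / deformed_sqrt b I c a j (b j) x))
         (at (b j))"
proof -
  define F where "F = local_sqrt b I c a"
  define D where "D = ball c r"
  define Z where "Z = ball (b j) (r / 2)"
  define K where "K z x = h x / deformed_sqrt b I c a j z x" for z x
  define Kx where "Kx z x = h x / (2 * (x - z)) / deformed_sqrt b I c a j z x" for z x
  have r: "r > 0" using c' ball_eq_empty[of c r] by (metis empty_iff not_le)
  have far_j: "2 * r \<le> norm (c - b j)" using far I(2) by blast
  have good: "(x - z) / (x - b j) \<notin> \<real>\<^sub>\<le>\<^sub>0" "x \<noteq> z" "x \<noteq> b j" if "x \<in> D" "z \<in> Z" for x z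
    using moved_point_ratio_in_ball[OF _ far_j, of x z] that r unfolding D_def Z_def
    by (auto simp: dist_commute)
  have Fh: "F holomorphic_on D" and Fnz: "\<And>x. x \<in> D \<Longrightarrow> F x \<noteq> 0"
    unfolding F_def D_def using local_sqrt_holomorphic local_sqrt_nonzero I(1) half_far_imp_far[OF far] a
    by auto
  have K_eq: "K z x = h x / (F x * csqrt ((x - z) / (x - b j)))"
    and Kx_eq: "Kx z x = h x / (2 * (x - z)) / (F x * csqrt ((x - z) / (x - b j)))" for z x
    unfolding K_def Kx_def F_def deformed_sqrt_def by simp_all
  have dK: "((\<lambda>z. K z x) has_field_derivative Kx z x) (at z)" if x: "x \<in> D" and z: "z \<in> Z" for z x
  proof -
    have "((\<lambda>z. h x / F x * (1 / csqrt ((x - z) / (x - b j)))) has_field_derivative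
             h x / F x * (1 / (2 * (x - z)) / csqrt ((x - z) / (x - b j)))) (at z)"
      using inverse_csqrt_moved_ratio_has_field_derivative[OF good[OF x z]] by (rule DERIV_cmult)
    then show ?thesis unfolding K_eq Kx_eq by (simp add: field_simps)
  qed
  have cont: "continuous_on (Z \<times> D) (\<lambda>q. K (fst q) (snd q))"
     "continuous_on (Z \<times> D) (\<lambda>q. Kx (fst q) (snd q))"
  proof -
    have "isCont (\<lambda>q. K (fst q) (snd q)) (z, x) \<and> isCont (\<lambda>q. Kx (fst q) (snd q)) (z, x)"
      if z: "z \<in> Z" and x: "x \<in> D" for z x
    proof -
      have "isCont h x" "isCont F x"
        using hh Fh x holomorphic_on_imp_continuous_on continuous_on_interior
        unfolding D_def by (metis interior_ball)+
      then have ch: "isCont (\<lambda>q. h (snd q)) (z, x)" and cF: "isCont (\<lambda>q. F (snd q)) (z, x)"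
        by (auto intro: isCont_o2[OF continuous_snd[OF continuous_ident]])
      have cs: "isCont (\<lambda>q. csqrt ((snd q - fst q) / (snd q - b j))) (z, x)"
        by (rule isCont_csqrt') (use good[OF x z] in \<open>auto intro!: continuous_intros\<close>)
      have nz: "F x \<noteq> 0" "csqrt ((x - z) / (x - b j)) \<noteq> 0" "x - z \<noteq> 0"
        using Fnz[OF x] good[OF x z] by auto
      show ?thesis unfolding K_eq Kx_eq
        by (intro conjI continuous_intros ch cF cs) (use nz in auto)
    qed
    then show "continuous_on (Z \<times> D) (\<lambda>q. K (fst q) (snd q))"
      "continuous_on (Z \<times> D) (\<lambda>q. Kx (fst q) (snd q))"
      by (auto intro!: continuous_at_imp_continuous_on)
  qed
  have "closed_segment c c' \<subseteq> D" unfolding D_def using c' r by (intro closed_segment_subset) auto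
  from contour_integral_linepath_has_field_derivative_param[OF _ this dK cont[unfolded Z_def]]
  show ?thesis using r unfolding K_def Kx_def Z_def by simp
qed

lemma branch_fun_upd: "j \<noteq> 1 \<Longrightarrow> branch (u(j := z)) = (branch u)(j := z)"
  by (auto simp: branch_def)

lemma hyp_poly_eq_prod: "hyp_poly g u x = (\<Prod>i\<in>{1..2*g+1}. x - branch u i)"
proof -
  have "{1..2*g+1} = insert 1 {2..2*g+1}" by auto
  then have "(\<Prod>i\<in>{1..2*g+1}. x - branch u i) = x * (\<Prod>i\<in>{2..2*g+1}. x - branch u i)"
    by (simp add: branch_def)
  also have "(\<Prod>i\<in>{2..2*g+1}. x - branch u i) = (\<Prod>i\<in>{2..2*g+1}. x - u i)"
    by (rule prod.cong) (auto simp: branch_def)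
  finally show ?thesis by (simp add: hyp_poly_def)
qed

lemma continuous_on_fun_upd:
  assumes "continuous_on S f"
  shows "continuous_on S (\<lambda>q. u(j := f q))"
proof (rule continuous_on_coordinatewise_then_product)
  fix i show "continuous_on S (\<lambda>q. (u(j := f q)) i)"
    by (cases "i = j") (use assms in auto)
qed

locale cycle_family =
  fixes g :: nat and U :: "(nat \<Rightarrow> complex) set" and p s :: "nat \<Rightarrow> (nat \<Rightarrow> complex) \<Rightarrow> real \<Rightarrow> complex"
  assumes U_open: "open U"
    and cycles: "\<And>u k. u \<in> U \<Longrightarrow> k \<in> {1..2*g} \<Longrightarrow> lifted_cycle g u (p k u) (s k u)"
    and cont_p: "\<And>k. k \<in> {1..2*g} \<Longrightarrow> continuous_on (U \<times> {0..1}) (\<lambda>x. p k (fst x) (snd x))"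
    and cont_s: "\<And>k. k \<in> {1..2*g} \<Longrightarrow> continuous_on (U \<times> {0..1}) (\<lambda>x. s k (fst x) (snd x))"
begin

lemma
  assumes u: "u \<in> U" and k: "k \<in> {1..2*g}"
  shows cycle_valid_path: "valid_path (p k u)"
    and cycle_continuous: "continuous_on {0..1} (p k u)"
    and cycle_closed: "p k u 1 = p k u 0"
    and lift_continuous: "continuous_on {0..1} (s k u)"
    and lift_closed: "s k u 1 = s k u 0"
    and lift_square: "\<And>t. t \<in> {0..1} \<Longrightarrow> (s k u t)^2 = (\<Prod>i\<in>{1..2*g+1}. p k u t - branch u i)"
    and cycle_avoids_branch: "\<And>t i. t \<in> {0..1} \<Longrightarrow> i \<in> {1..2*g+1} \<Longrightarrow> p k u t \<noteq> branch u i"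
    and lift_nonzero: "\<And>t. t \<in> {0..1} \<Longrightarrow> s k u t \<noteq> 0"
proof -
  have L: "lifted_cycle g u (p k u) (s k u)" by (rule cycles[OF u k])
  then show vp: "valid_path (p k u)" and "p k u 1 = p k u 0" "continuous_on {0..1} (s k u)" "s k u 1 = s k u 0"
    by (auto simp: lifted_cycle_def pathfinish_def pathstart_def)
  show "continuous_on {0..1} (p k u)" using vp valid_path_imp_path path_def by blast
  show sq: "\<And>t. t \<in> {0..1} \<Longrightarrow> (s k u t)^2 = (\<Prod>i\<in>{1..2*g+1}. p k u t - branch u i)"
    using L by (auto simp: lifted_cycle_def hyp_poly_eq_prod)
  show av: "\<And>t i. t \<in> {0..1} \<Longrightarrow> i \<in> {1..2*g+1} \<Longrightarrow> p k u t \<noteq> branch u i"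
    using L unfolding lifted_cycle_def path_image_def by blast
  show "s k u t \<noteq> 0" if t: "t \<in> {0..1}" for t
    using sq[OF t] av[OF t] by auto
qed

lemma cycle_branch_distance:
  assumes u: "u \<in> U" and k: "k \<in> {1..2*g}"
  obtains d where "d > 0" "\<And>t i. t \<in> {0..1} \<Longrightarrow> i \<in> {1..2*g+1} \<Longrightarrow> d \<le> norm (p k u t - branch u i)"
proof -
  define K where "K = path_image (p k u)"
  have K: "closed K" "K \<noteq> {}" unfolding K_def
    using cycle_valid_path[OF u k] by (auto intro: compact_imp_closed compact_path_image valid_path_imp_path)
  have nK: "branch u i \<notin> K" if "i \<in> {1..2*g+1}" for i
    using cycle_avoids_branch[OF u k _ that] unfolding K_def path_image_def by force
  define d where "d = Min ((\<lambda>i. infdist (branch u i) K) ` {1..2*g+1})"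
  have "d > 0" unfolding d_def using infdist_pos_not_in_closed[OF K] nK by (auto simp: Min_gr_iff)
  moreover have "d \<le> norm (p k u t - branch u i)" if t: "t \<in> {0..1}" and i: "i \<in> {1..2*g+1}" for t i
  proof -
    have "d \<le> infdist (branch u i) K" unfolding d_def using i by (intro Min_le) auto
    also have "\<dots> \<le> dist (branch u i) (p k u t)"
      using t unfolding K_def path_image_def by (intro infdist_le) auto
    finally show ?thesis by (simp add: dist_norm norm_minus_commute)
  qed
  ultimately show ?thesis using that by blast
qed

lemma open_moved_point_set: "open {z. u(j := z) \<in> U}"
  using continuous_imp_open_vimage[OF continuous_on_fun_upd[OF continuous_on_id] open_UNIV U_open]
  by (simp add: vimage_def)

lemma
  assumes k: "k \<in> {1..2*g}"
  shows continuous_on_moved_cycle: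
      "continuous_on ({z. u(j := z) \<in> U} \<times> {0..1}) (\<lambda>q. p k (u(j := fst q)) (snd q))"
    and continuous_on_moved_lift:
      "continuous_on ({z. u(j := z) \<in> U} \<times> {0..1}) (\<lambda>q. s k (u(j := fst q)) (snd q))"
proof -
  have cm: "continuous_on ({z. u(j := z) \<in> U} \<times> {0..1}) (\<lambda>q. (u(j := fst q), snd q))"
    by (intro continuous_intros continuous_on_fun_upd)
  have im: "(\<lambda>q. (u(j := fst q), snd q)) ` ({z. u(j := z) \<in> U} \<times> {0..1}) \<subseteq> U \<times> {0..1}"
    by auto
  show "continuous_on ({z. u(j := z) \<in> U} \<times> {0..1}) (\<lambda>q. p k (u(j := fst q)) (snd q))"
    using continuous_on_compose2[OF cont_p[OF k] cm im] by simp
  show "continuous_on ({z. u(j := z) \<in> U} \<times> {0..1}) (\<lambda>q. s k (u(j := fst q)) (snd q))"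
    using continuous_on_compose2[OF cont_s[OF k] cm im] by simp
qed

text \<open>Data for following the cycle \<open>k\<close> by local branches while \<open>u j\<close> moves within \<open>\<rho>\<close>:
  nodes \<open>p k u (m/N)\<close>, discs of radius \<open>r\<close> around them of which the doubles avoid all branch points,
  and every moved cycle stays, piece by piece, in these discs.\<close>
definition fine_subdivision :: "(nat \<Rightarrow> complex) \<Rightarrow> nat \<Rightarrow> nat \<Rightarrow> nat \<Rightarrow> real \<Rightarrow> real \<Rightarrow> bool" where
  "fine_subdivision u k j N r \<rho> \<longleftrightarrow> 0 < N \<and> 0 < r \<and> 0 < \<rho> \<and> \<rho> \<le> r \<and>
     (\<forall>m\<le>N. \<forall>i\<in>{1..2*g+1}. 2 * r \<le> norm (p k u (real m / N) - branch u i)) \<and>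
     (\<forall>z. dist z (u j) < \<rho> \<longrightarrow> u(j := z) \<in> U \<and>
        (\<forall>m<N. \<forall>t\<in>{real m / N .. real (Suc m) / N}. p k (u(j := z)) t \<in> ball (p k u (real m / N)) r))"

lemma fine_subdivision_exists:
  assumes u: "u \<in> U" and k: "k \<in> {1..2*g}"
  obtains N r \<rho> where "fine_subdivision u k j N r \<rho>"
proof -
  obtain d where d: "d > 0" "\<And>t i. t \<in> {0..1} \<Longrightarrow> i \<in> {1..2*g+1} \<Longrightarrow> d \<le> norm (p k u t - branch u i)"
    using cycle_branch_distance[OF u k] by blast
  define r where "r = d / 2"
  have r: "r > 0" using d by (simp add: r_def)
  have "u j \<in> {z. u(j := z) \<in> U}" using u by simp
  then obtain \<rho>0 where \<rho>0: "\<rho>0 > 0" "cball (u j) \<rho>0 \<subseteq> {z. u(j := z) \<in> U}"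
    using open_contains_cball[of "{z. u(j := z) \<in> U}"] open_moved_point_set[of u j] by blast
  define Kc where "Kc = cball (u j) \<rho>0 \<times> {0..1::real}"
  define \<Phi> where "\<Phi> q = p k (u(j := fst q)) (snd q)" for q
  have "continuous_on Kc \<Phi>"
    unfolding Kc_def \<Phi>_def
    by (rule continuous_on_subset[OF continuous_on_moved_cycle[OF k]]) (use \<rho>0(2) in auto)
  moreover have "compact Kc" unfolding Kc_def by (simp add: compact_Times)
  ultimately have "uniformly_continuous_on Kc \<Phi>" by (rule compact_uniformly_continuous)
  moreover have "r / 2 > 0" using r by simp
  ultimately obtain \<epsilon> where \<epsilon>: "\<epsilon> > 0"
    "\<And>q q'. q \<in> Kc \<Longrightarrow> q' \<in> Kc \<Longrightarrow> dist q' q < \<epsilon> \<Longrightarrow> dist (\<Phi> q') (\<Phi> q) < r/2"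
    unfolding uniformly_continuous_on_def by metis
  obtain N :: nat where N: "1 / \<epsilon> < real N" using reals_Archimedean2 by blast
  have N0: "N > 0" using N \<epsilon> by (cases N) (auto simp: field_simps)
  have invN: "1 / real N < \<epsilon>" using N \<epsilon> N0 by (simp add: field_simps)
  define \<rho> where "\<rho> = min (min \<rho>0 \<epsilon>) (r / 2)"
  have near: "u(j := z) \<in> U \<and>
      (\<forall>m<N. \<forall>t\<in>{real m / N .. real (Suc m) / N}. p k (u(j := z)) t \<in> ball (p k u (real m / N)) r)"
    if z: "dist z (u j) < \<rho>" for z
  proof (intro conjI allI impI ballI)
    have "z \<in> cball (u j) \<rho>0" using z unfolding \<rho>_def by (simp add: dist_commute)
    then show "u(j := z) \<in> U" using \<rho>0(2) by blast
    fix m t assume m: "m < N" and t: "t \<in> {real m / N .. real (Suc m) / N}"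
    have node: "real m / N \<in> {0..1}" using m subdivision_node_in_unit_interval by simp
    have t01: "t \<in> {0..1}" using subdivision_piece_subset[OF m] t by blast
    have K: "(u j, real m / N) \<in> Kc" "(u j, t) \<in> Kc" "(z, t) \<in> Kc"
      using \<rho>0 z node t01 unfolding Kc_def \<rho>_def by (auto simp: dist_commute)
    have "t - real m / N \<le> 1 / N" using t by (simp add: add_divide_distrib)
    then have "dist (u j, t) (u j, real m / N) < \<epsilon>"
      using t invN by (simp add: dist_Pair_Pair dist_real_def)
    then have "dist (p k u t) (p k u (real m / N)) < r/2"
      using \<epsilon>(2)[OF K(1,2)] unfolding \<Phi>_def by simp
    moreover have "dist (z, t) (u j, t) < \<epsilon>" using z unfolding \<rho>_def by (simp add: dist_Pair_Pair)
    then have "dist (p k (u(j := z)) t) (p k u t) < r/2"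
      using \<epsilon>(2)[OF K(2,3)] unfolding \<Phi>_def by simp
    ultimately have "dist (p k (u(j := z)) t) (p k u (real m / N)) < r"
      using dist_triangle[of "p k (u(j := z)) t" "p k u (real m / N)" "p k u t"] by linarith
    then show "p k (u(j := z)) t \<in> ball (p k u (real m / N)) r" by (simp add: dist_commute)
  qed
  have "2 * r \<le> norm (p k u (real m / N) - branch u i)" if "m \<le> N" "i \<in> {1..2*g+1}" for m i
    using d(2)[of "real m / N" i] that N0 unfolding r_def by (simp add: field_simps)
  moreover have "0 < \<rho>" "\<rho> \<le> r" using \<rho>0 \<epsilon> r unfolding \<rho>_def by auto
  ultimately have "fine_subdivision u k j N r \<rho>"
    unfolding fine_subdivision_def using N0 r near by blast
  then show ?thesis by (rule that)
qed

lemma fine_subdivisionD: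
  assumes "fine_subdivision u k j N r \<rho>"
  shows "0 < N" "0 < r" "0 < \<rho>" "\<rho> \<le> r"
    "\<And>m i. m \<le> N \<Longrightarrow> i \<in> {1..2*g+1} \<Longrightarrow> 2 * r \<le> norm (p k u (real m / N) - branch u i)"
    "\<And>z. dist z (u j) < \<rho> \<Longrightarrow> u(j := z) \<in> U"
    "\<And>z m t. dist z (u j) < \<rho> \<Longrightarrow> m < N \<Longrightarrow> t \<in> {real m / N .. real (Suc m) / N} \<Longrightarrow>
       p k (u(j := z)) t \<in> ball (p k u (real m / N)) r"
  using assms unfolding fine_subdivision_def by blast+

lemma isCont_moved_cycle_point:
  assumes u: "u \<in> U" and k: "k \<in> {1..2*g}" and t: "t \<in> {0..1}"
  shows "isCont (\<lambda>z. p k (u(j := z)) t) (u j)" "isCont (\<lambda>z. s k (u(j := z)) t) (u j)"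
proof -
  define V where "V = {z. u(j := z) \<in> U}"
  have V: "open V" "u j \<in> V" using open_moved_point_set u unfolding V_def by auto
  have cz: "continuous_on V (\<lambda>z. (z, t))" by (intro continuous_intros)
  have iz: "(\<lambda>z. (z, t)) ` V \<subseteq> {z. u(j := z) \<in> U} \<times> {0..1}" using t unfolding V_def by auto
  show "isCont (\<lambda>z. p k (u(j := z)) t) (u j)"
    using continuous_on_compose2[OF continuous_on_moved_cycle[OF k] cz iz] V
    by (simp add: continuous_on_eq_continuous_at)
  show "isCont (\<lambda>z. s k (u(j := z)) t) (u j)"
    using continuous_on_compose2[OF continuous_on_moved_lift[OF k] cz iz] V
    by (simp add: continuous_on_eq_continuous_at)
qed

definition piece_branch ::
    "(nat \<Rightarrow> complex) \<Rightarrow> nat \<Rightarrow> nat \<Rightarrow> nat \<Rightarrow> complex \<Rightarrow> nat \<Rightarrow> complex \<Rightarrow> complex" where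
  "piece_branch u k N j z m =
     deformed_sqrt (branch u) {1..2*g+1} (p k u (real m / N)) (s k u (real m / N)) j z"

context
  fixes u k j N r \<rho>
  assumes u: "u \<in> U" and k: "k \<in> {1..2*g}" and j: "j \<in> {2..2*g+1}"
    and fine: "fine_subdivision u k j N r \<rho>"
begin

lemma
  assumes m: "m \<le> N" and z: "dist z (u j) < r"
  shows piece_branch_holomorphic:
      "piece_branch u k N j z m holomorphic_on ball (p k u (real m / N)) r"
    and piece_branch_nonzero:
      "\<And>x. x \<in> ball (p k u (real m / N)) r \<Longrightarrow> piece_branch u k N j z m x \<noteq> 0"
    and piece_branch_square:
      "\<And>x. x \<in> ball (p k u (real m / N)) r \<Longrightarrow>
         (piece_branch u k N j z m x)^2 = (\<Prod>i\<in>{1..2*g+1}. x - branch (u(j := z)) i)"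
    and ball_avoids_moved_branch_points:
      "\<And>x. x \<in> ball (p k u (real m / N)) r \<Longrightarrow> x \<notin> branch (u(j := z)) ` {1..2*g+1}"
proof -
  have I: "finite {1..2*g+1}" "j \<in> {1..2*g+1}" and j1: "j \<noteq> 1" using j by auto
  have bj: "branch u j = u j" using j1 by (simp add: branch_def)
  have far: "\<forall>i\<in>{1..2*g+1}. 2 * r \<le> norm (p k u (real m / N) - branch u i)"
    using fine_subdivisionD(5)[OF fine m] by blast
  have zb: "dist z (branch u j) < r" using z bj by simp
  have node: "real m / N \<in> {0..1}" using m by (rule subdivision_node_in_unit_interval)
  show "piece_branch u k N j z m holomorphic_on ball (p k u (real m / N)) r"
    unfolding piece_branch_def by (rule deformed_sqrt_holomorphic[OF I far zb])
  show "piece_branch u k N j z m x \<noteq> 0" if "x \<in> ball (p k u (real m / N)) r" for x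
    unfolding piece_branch_def
    by (rule deformed_sqrt_nonzero[OF I far zb lift_nonzero[OF u k node] that])
  show "(piece_branch u k N j z m x)^2 = (\<Prod>i\<in>{1..2*g+1}. x - branch (u(j := z)) i)"
    if "x \<in> ball (p k u (real m / N)) r" for x
    using deformed_sqrt_square[OF I far zb that lift_square[OF u k node]]
    unfolding piece_branch_def branch_fun_upd[OF j1] .
  show "x \<notin> branch (u(j := z)) ` {1..2*g+1}" if x: "x \<in> ball (p k u (real m / N)) r" for x
  proof
    assume "x \<in> branch (u(j := z)) ` {1..2*g+1}"
    then obtain i where i: "i \<in> {1..2*g+1}" "x = ((branch u)(j := z)) i"
      unfolding branch_fun_upd[OF j1] by blast
    show False
    proof (cases "i = j")
      case True
      then show False using moved_point_ratio_in_ball(2)[OF x _ zb] far I(2) i by auto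
    next
      case False
      then show False using ball_far_from[OF x] far i fine_subdivisionD(2)[OF fine] by fastforce
    qed
  qed
qed

lemma piece_branch_unmoved:
  assumes m: "m \<le> N" and x: "x \<in> ball (p k u (real m / N)) r"
  shows "piece_branch u k N j (u j) m x =
           local_sqrt (branch u) {1..2*g+1} (p k u (real m / N)) (s k u (real m / N)) x"
proof -
  have bj: "branch u j = u j" using j by (simp add: branch_def)
  have "x \<notin> branch u ` {1..2*g+1}"
    using ball_avoids_moved_branch_points[OF m _ x, of "u j"] fine_subdivisionD(2)[OF fine] by simp
  moreover have "u j \<in> branch u ` {1..2*g+1}" using j bj by (metis atLeastAtMost_iff imageI le_trans one_le_numeral)
  ultimately have "x \<noteq> u j" by blast
  then show ?thesis unfolding piece_branch_def using deformed_sqrt_unmoved[of x "branch u" j] bj by simp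
qed

lemma piece_branch_node:
  assumes m: "m \<le> N"
  shows "piece_branch u k N j (u j) m (p k u (real m / N)) = s k u (real m / N)"
proof -
  have "p k u (real m / N) \<in> ball (p k u (real m / N)) r" using fine_subdivisionD(2)[OF fine] by simp
  moreover have "\<forall>i\<in>{1..2*g+1}. p k u (real m / N) \<noteq> branch u i"
    using cycle_avoids_branch[OF u k subdivision_node_in_unit_interval[OF m]] by blast
  ultimately show ?thesis using piece_branch_unmoved[OF m] local_sqrt_centre by simp
qed


lemma eventually_near_moved_point: "\<forall>\<^sub>F z in nhds (u j). dist z (u j) < \<rho>"
  using fine_subdivisionD(3)[OF fine] by (auto simp: eventually_nhds_metric dist_commute)

lemma isCont_piece_branch_at_moved_node:
  assumes m: "m \<le> N"
  shows "isCont (\<lambda>z. piece_branch u k N j z m (p k (u(j := z)) (real m / N))) (u j)"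
proof -
  define t where "t = real m / N"
  define c where "c = p k u t"
  define X where "X z = p k (u(j := z)) t" for z
  define L where "L = local_sqrt (branch u) {1..2*g+1} c (s k u t)"
  have t: "t \<in> {0..1}" unfolding t_def using m by (rule subdivision_node_in_unit_interval)
  have r: "r > 0" using fine_subdivisionD(2)[OF fine] .
  have bj: "branch u j = u j" using j by (simp add: branch_def)
  have cX: "isCont X (u j)" unfolding X_def using isCont_moved_cycle_point[OF u k t] by auto
  have Xu: "X (u j) = c" unfolding X_def c_def by simp
  have cu: "c \<noteq> u j" using cycle_avoids_branch[OF u k t, of j] j bj unfolding c_def by auto
  have "L holomorphic_on ball c r"
    using fine_subdivisionD(5)[OF fine, of m] m unfolding L_def c_def t_def
    by (intro local_sqrt_holomorphic[OF _ half_far_imp_far]) auto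
  then have cL: "isCont L (X (u j))"
    using continuous_on_interior[OF holomorphic_on_imp_continuous_on, of _ "ball c r" c] r
    unfolding Xu by simp
  have "(\<lambda>z. piece_branch u k N j z m (p k (u(j := z)) (real m / N)))
      = (\<lambda>z. L (X z) * csqrt ((X z - z) / (X z - u j)))"
    unfolding piece_branch_def deformed_sqrt_def L_def X_def c_def t_def bj ..
  then show ?thesis
  proof (simp only:, intro continuous_intros isCont_o2[OF cX, where g=L] isCont_csqrt')
    show "X (u j) - u j \<noteq> 0" "(X (u j) - u j) / (X (u j) - u j) \<notin> \<real>\<^sub>\<le>\<^sub>0"
      using Xu cu by simp_all
  qed (use cX cL in auto)
qed

text \<open>At a node the moved lift and the deformed branch are both continuous in \<open>z\<close>, agree
  and are nonzero at \<open>z = u j\<close>, and square to the same value; so they agree nearby.\<close>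
lemma lift_eventually_piece_branch_at_node:
  assumes m: "m < N"
  shows "\<forall>\<^sub>F z in nhds (u j).
           s k (u(j := z)) (real m / N) = piece_branch u k N j z m (p k (u(j := z)) (real m / N))"
proof -
  define t where "t = real m / N"
  define A where "A z = s k (u(j := z)) t" for z
  define X where "X z = p k (u(j := z)) t" for z
  define B where "B z = piece_branch u k N j z m (X z)" for z
  have t: "t \<in> {0..1}" unfolding t_def using m by (simp add: subdivision_node_in_unit_interval)
  have cA: "isCont A (u j)" unfolding A_def using isCont_moved_cycle_point[OF u k t] by auto
  have cB: "isCont B (u j)"
    unfolding B_def X_def t_def using isCont_piece_branch_at_moved_node m by simp
  have "B (u j) = s k u t" unfolding B_def X_def t_def using piece_branch_node m by simp
  moreover have "A (u j) = s k u t" unfolding A_def by simp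
  ultimately have "((\<lambda>z. A z + B z) \<longlongrightarrow> s k u t + s k u t) (at (u j))"
    using cA cB unfolding isCont_def by (metis tendsto_add)
  moreover have "s k u t + s k u t \<noteq> 0" using lift_nonzero[OF u k t] by simp
  ultimately have "\<forall>\<^sub>F z in at (u j). A z + B z \<noteq> 0" by (rule tendsto_imp_eventually_ne)
  then have "\<forall>\<^sub>F z in at (u j). A z = B z"
    using eventually_near_moved_point[unfolded eventually_nhds_conv_at, THEN conjunct1]
  proof eventually_elim
    case (elim z)
    have X: "X z \<in> ball (p k u t) r"
      using fine_subdivisionD(7)[OF fine elim(2) m, of t] m unfolding X_def t_def
      by (simp add: divide_right_mono)
    have "(A z)^2 = (\<Prod>i\<in>{1..2*g+1}. X z - branch (u(j := z)) i)"
      unfolding A_def X_def using lift_square[OF fine_subdivisionD(6)[OF fine elim(2)] k t] .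
    also have "\<dots> = (B z)^2"
      unfolding B_def using piece_branch_square[OF _ _ X[unfolded t_def]] m elim(2)
        fine_subdivisionD(4)[OF fine] by simp
    finally show ?case using elim(1) by (rule square_eq_imp_eq_if_sum_nonzero)
  qed
  then show ?thesis unfolding eventually_nhds_conv_at A_def B_def X_def t_def
    using piece_branch_node m by simp
qed

lemma lift_eq_piece_branch_on_piece:
  assumes z: "dist z (u j) < \<rho>" and m: "m < N"
    and node: "s k (u(j := z)) (real m / N) = piece_branch u k N j z m (p k (u(j := z)) (real m / N))"
  shows "\<forall>t\<in>{real m / N .. real (Suc m) / N}. s k (u(j := z)) t = piece_branch u k N j z m (p k (u(j := z)) t)"
proof (rule continuous_square_roots_eq[OF connected_Icc])
  define T where "T = {real m / N .. real (Suc m) / N}"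
  have uz: "u(j := z) \<in> U" using fine_subdivisionD(6)[OF fine z] .
  have zr: "dist z (u j) < r" using z fine_subdivisionD(4)[OF fine] by simp
  have T: "T \<subseteq> {0..1}" unfolding T_def by (rule subdivision_piece_subset[OF m])
  have inb: "p k (u(j := z)) t \<in> ball (p k u (real m / N)) r" if "t \<in> T" for t
    using fine_subdivisionD(7)[OF fine z m] that unfolding T_def by blast
  show "continuous_on T (s k (u(j := z)))"
    by (rule continuous_on_subset[OF lift_continuous[OF uz k] T])
  show "continuous_on T (\<lambda>t. piece_branch u k N j z m (p k (u(j := z)) t))"
    by (rule continuous_on_compose2[OF holomorphic_on_imp_continuous_on[OF piece_branch_holomorphic]
          continuous_on_subset[OF cycle_continuous[OF uz k] T]])
       (use u k j fine m zr inb in auto)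
  show "\<forall>t\<in>T. piece_branch u k N j z m (p k (u(j := z)) t) \<noteq> 0"
    using piece_branch_nonzero[OF _ zr] m inb by auto
  show "\<forall>t\<in>T. (s k (u(j := z)) t)^2 = (piece_branch u k N j z m (p k (u(j := z)) t))^2"
    using lift_square[OF uz k] piece_branch_square[OF _ zr] m inb T by auto
  show "real m / N \<in> T" unfolding T_def by (simp add: divide_right_mono)
qed (rule node)

lemma lift_eventually_piece_branch:
  "\<forall>\<^sub>F z in nhds (u j). \<forall>m<N. \<forall>t\<in>{real m / N .. real (Suc m) / N}.
     s k (u(j := z)) t = piece_branch u k N j z m (p k (u(j := z)) t)"
proof -
  have "\<forall>\<^sub>F z in nhds (u j). \<forall>m\<in>{..<N}.
          s k (u(j := z)) (real m / N) = piece_branch u k N j z m (p k (u(j := z)) (real m / N))"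
    using lift_eventually_piece_branch_at_node by (intro eventually_ball_finite) auto
  with eventually_near_moved_point show ?thesis
    by eventually_elim (use lift_eq_piece_branch_on_piece in blast)
qed


lemma subdivision_node_next:
  "m < N \<Longrightarrow> p k u (real (Suc m) / N) \<in> ball (p k u (real m / N)) r"
  using fine_subdivisionD(7)[OF fine, of "u j" m "real (Suc m) / N"] fine_subdivisionD(3)[OF fine]
  by (simp add: divide_right_mono)

lemma lifted_integral_eventually_chain:
  "\<forall>\<^sub>F z in nhds (u j). \<forall>h. h holomorphic_on - branch (u(j := z)) ` {1..2*g+1} \<longrightarrow>
     (lifted_integrand h (p k (u(j := z))) (s k (u(j := z))) has_integral
        chain_integral N (\<lambda>m. p k u (real m / N)) (piece_branch u k N j z) h) {0..1}"
  using eventually_near_moved_point lift_eventually_piece_branch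
proof eventually_elim
  case (elim z)
  have uz: "u(j := z) \<in> U" using fine_subdivisionD(6)[OF fine elim(1)] .
  have zr: "dist z (u j) < r" using elim(1) fine_subdivisionD(4)[OF fine] by simp
  have N: "N > 0" using fine_subdivisionD(1)[OF fine] .
  show ?case
  proof (intro allI impI has_integral_lifted_chain[OF N fine_subdivisionD(2)[OF fine]
        cycle_valid_path[OF uz k] cycle_closed[OF uz k] lift_closed[OF uz k]])
    fix h assume hh: "h holomorphic_on - branch (u(j := z)) ` {1..2*g+1}"
    show "p k u (real N / N) = p k u (real 0 / N)" using cycle_closed[OF u k] N by simp
    show "piece_branch u k N j z N = piece_branch u k N j z 0"
      unfolding piece_branch_def using cycle_closed[OF u k] lift_closed[OF u k] N by simp
    show "\<And>m. m \<le> N \<Longrightarrow> piece_branch u k N j z m holomorphic_on ball (p k u (real m / N)) r"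
      using piece_branch_holomorphic[OF _ zr] .
    show "\<And>m x. m \<le> N \<Longrightarrow> x \<in> ball (p k u (real m / N)) r \<Longrightarrow> piece_branch u k N j z m x \<noteq> 0"
      using piece_branch_nonzero[OF _ zr] .
    show "\<And>m x. m \<le> N \<Longrightarrow> x \<in> ball (p k u (real m / N)) r \<Longrightarrow>
            (piece_branch u k N j z m x)^2 = (\<Prod>i\<in>{1..2*g+1}. x - branch (u(j := z)) i)"
      using piece_branch_square[OF _ zr] .
    show "\<And>m. m \<le> N \<Longrightarrow> h holomorphic_on ball (p k u (real m / N)) r"
      using holomorphic_on_subset[OF hh] ball_avoids_moved_branch_points[OF _ zr] by blast
    show "\<And>m. m < N \<Longrightarrow> p k u (real (Suc m) / N) \<in> ball (p k u (real m / N)) r"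
      by (rule subdivision_node_next)
    show "\<And>m t. m < N \<Longrightarrow> t \<in> {real m / N .. real (Suc m) / N} \<Longrightarrow>
            p k (u(j := z)) t \<in> ball (p k u (real m / N)) r \<and>
            s k (u(j := z)) t = piece_branch u k N j z m (p k (u(j := z)) t)"
      using fine_subdivisionD(7)[OF fine elim(1)] elim(2) by blast
  qed
qed

lemma lift_eq_local_sqrt_on_piece:
  assumes m: "m < N" and t: "t \<in> {real m / N .. real (Suc m) / N}"
  shows "p k u t \<in> ball (p k u (real m / N)) r"
    "s k u t = local_sqrt (branch u) {1..2*g+1} (p k u (real m / N)) (s k u (real m / N)) (p k u t)"
proof -
  show inb: "p k u t \<in> ball (p k u (real m / N)) r"
    using fine_subdivisionD(7)[OF fine, of "u j"] fine_subdivisionD(3)[OF fine] m t by simp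
  have "s k u t = piece_branch u k N j (u j) m (p k u t)"
    using eventually_nhds_x_imp_x[OF lift_eventually_piece_branch] m t by simp
  then show "s k u t = local_sqrt (branch u) {1..2*g+1} (p k u (real m / N)) (s k u (real m / N)) (p k u t)"
    using piece_branch_unmoved[OF _ inb] m by simp
qed

lemma chain_integral_piece_branch_has_field_derivative:
  assumes hh: "h holomorphic_on - branch u ` ({1..2*g+1} - {j})"
  shows "((\<lambda>z. chain_integral N (\<lambda>m. p k u (real m / N)) (piece_branch u k N j z) h) has_field_derivative
           chain_integral N (\<lambda>m. p k u (real m / N)) (piece_branch u k N j (u j)) (\<lambda>x. h x / (2 * (x - u j))))
         (at (u j))"
  unfolding chain_integral_def
proof (intro DERIV_sum)
  fix m assume "m \<in> {..<N}"
  then have m: "m < N" by simp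
  have node: "real m / N \<in> {0..1}" using m by (simp add: subdivision_node_in_unit_interval)
  have jI: "j \<in> {1..2*g+1}" and bj: "branch u j = u j" using j by (auto simp: branch_def)
  have "ball (p k u (real m / N)) r \<subseteq> - branch u ` ({1..2*g+1} - {j})"
  proof
    fix x assume "x \<in> ball (p k u (real m / N)) r"
    then have "x \<notin> branch u ` {1..2*g+1}"
      using ball_avoids_moved_branch_points[of m "u j" x] fine_subdivisionD(2)[OF fine] m by simp
    then show "x \<in> - branch u ` ({1..2*g+1} - {j})" by blast
  qed
  then have "h holomorphic_on ball (p k u (real m / N)) r" by (rule holomorphic_on_subset[OF hh])
  then show "((\<lambda>z. contour_integral (linepath (p k u (real m / N)) (p k u (real (Suc m) / N)))
                 (\<lambda>x. h x / piece_branch u k N j z m x))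
           has_field_derivative contour_integral (linepath (p k u (real m / N)) (p k u (real (Suc m) / N)))
             (\<lambda>x. h x / (2 * (x - u j)) / piece_branch u k N j (u j) m x)) (at (u j))"
    unfolding piece_branch_def bj[symmetric]
    using fine_subdivisionD(5)[OF fine] m lift_nonzero[OF u k node] subdivision_node_next[OF m]
    by (intro chord_integral_deformed_sqrt_has_field_derivative[OF _ jI]) auto
qed

end

lemma lifted_integral_has_field_derivative:
  assumes u: "u \<in> U" and k: "k \<in> {1..2*g}" and j: "j \<in> {2..2*g+1}"
    and hh: "h holomorphic_on - branch u ` ({1..2*g+1} - {j})"
  shows "((\<lambda>z. lifted_integral h (p k (u(j := z))) (s k (u(j := z)))) has_field_derivative
           lifted_integral (\<lambda>x. h x / (2 * (x - u j))) (p k u) (s k u)) (at (u j))"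
proof -
  obtain N r \<rho> where fine: "fine_subdivision u k j N r \<rho>" using fine_subdivision_exists[OF u k] .
  define c where "c m = p k u (real m / N)" for m
  define C where "C z = chain_integral N c (piece_branch u k N j z) h" for z
  have j1: "j \<noteq> 1" and jI: "j \<in> {1..2*g+1}" and bj: "branch u j = u j"
    using j by (auto simp: branch_def)
  note chain = lifted_integral_eventually_chain[OF u k j fine, folded c_def]
  have evP: "\<forall>\<^sub>F z in nhds (u j). lifted_integral h (p k (u(j := z))) (s k (u(j := z))) = C z"
    using chain
  proof (rule eventually_mono)
    fix z assume chain_z: "\<forall>h. h holomorphic_on - branch (u(j := z)) ` {1..2*g+1} \<longrightarrow>
      (lifted_integrand h (p k (u(j := z))) (s k (u(j := z))) has_integral
         chain_integral N c (piece_branch u k N j z) h) {0..1}"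
    have "h holomorphic_on - branch (u(j := z)) ` {1..2*g+1}"
      by (rule holomorphic_on_subset[OF hh]) (auto simp: branch_fun_upd[OF j1])
    then have "(lifted_integrand h (p k (u(j := z))) (s k (u(j := z))) has_integral C z) {0..1}"
      using chain_z unfolding C_def by blast
    then show "lifted_integral h (p k (u(j := z))) (s k (u(j := z))) = C z"
      unfolding lifted_integral_def by (rule integral_unique)
  qed
  have dC: "(C has_field_derivative
      chain_integral N c (piece_branch u k N j (u j)) (\<lambda>x. h x / (2 * (x - u j)))) (at (u j))"
    unfolding C_def c_def by (rule chain_integral_piece_branch_has_field_derivative[OF u k j fine hh])
  have "(\<lambda>x. h x / (2 * (x - u j))) holomorphic_on - branch u ` {1..2*g+1}"
  proof (intro holomorphic_intros)
    show "h holomorphic_on - branch u ` {1..2*g+1}" by (rule holomorphic_on_subset[OF hh]) auto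
    have "u j \<in> branch u ` {1..2*g+1}" using imageI[OF jI, of "branch u"] bj by simp
    then show "2 * (x - u j) \<noteq> 0" if "x \<in> - branch u ` {1..2*g+1}" for x
      using that by auto
  qed
  then have "(lifted_integrand (\<lambda>x. h x / (2 * (x - u j))) (p k u) (s k u) has_integral
      chain_integral N c (piece_branch u k N j (u j)) (\<lambda>x. h x / (2 * (x - u j)))) {0..1}"
    by (rule eventually_nhds_x_imp_x[OF chain, unfolded fun_upd_triv, rule_format])
  then have "lifted_integral (\<lambda>x. h x / (2 * (x - u j))) (p k u) (s k u)
      = chain_integral N c (piece_branch u k N j (u j)) (\<lambda>x. h x / (2 * (x - u j)))"
    unfolding lifted_integral_def by (rule integral_unique)
  then show ?thesis using DERIV_cong_ev[OF refl evP refl] dC by simp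
qed

lemma lifted_integral_has_integral:
  assumes g: "g \<ge> 1" and u: "u \<in> U" and k: "k \<in> {1..2*g}"
    and hh: "h holomorphic_on - branch u ` {1..2*g+1}"
  shows "(lifted_integrand h (p k u) (s k u) has_integral lifted_integral h (p k u) (s k u)) {0..1}"
proof -
  have j: "2 \<in> {2..2*g+1}" using g by simp
  obtain N r \<rho> where fine: "fine_subdivision u k 2 N r \<rho>" using fine_subdivision_exists[OF u k] .
  note chain = eventually_nhds_x_imp_x[OF lifted_integral_eventually_chain[OF u k j fine],
      unfolded fun_upd_triv]
  have "(lifted_integrand h (p k u) (s k u) has_integral
      chain_integral N (\<lambda>m. p k u (real m / N)) (piece_branch u k N 2 (u 2)) h) {0..1}"
    using chain[rule_format, OF hh] .
  moreover from this have "lifted_integral h (p k u) (s k u)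
      = chain_integral N (\<lambda>m. p k u (real m / N)) (piece_branch u k N 2 (u 2)) h"
    unfolding lifted_integral_def by (rule integral_unique)
  ultimately show ?thesis by simp
qed

section \<open>Periods\<close>

text \<open>The form \<open>((2g-1) + \<Sum> u\<^sub>i/(x-u\<^sub>i)) dx/v\<close> is \<open>d(-2x/v)\<close>; near each node
  \<open>v\<close> is a branch of \<open>local_sqrt\<close>, whose logarithmic derivative is \<open>\<Sum> 1/(2(x-u\<^sub>i))\<close>.\<close>
lemma lifted_integral_exact_form:
  assumes g: "g \<ge> 1" and u: "u \<in> U" and k: "k \<in> {1..2*g}"
  shows "(lifted_integrand (\<lambda>x. (2 * of_nat g - 1) + (\<Sum>i\<in>{2..2*g+1}. u i / (x - u i))) (p k u) (s k u)
           has_integral 0) {0..1}"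
proof -
  have j: "2 \<in> {2..2*g+1}" using g by simp
  obtain N r \<rho> where fine: "fine_subdivision u k 2 N r \<rho>" using fine_subdivision_exists[OF u k] .
  have N: "N > 0" and r: "r > 0" using fine_subdivisionD(1,2)[OF fine] .
  define I where "I = {1..2*g+1}"
  define F where "F m = local_sqrt (branch u) I (p k u (real m / N)) (s k u (real m / N))" for m
  define hs where "hs x = (2 * of_nat g - 1) + (\<Sum>i\<in>{2..2*g+1}. u i / (x - u i))" for x
  define \<Lambda> where "\<Lambda> t = - 2 * p k u t / s k u t" for t
  have piece: "(lifted_integrand hs (p k u) (s k u) has_integral \<Lambda> (real (Suc m) / N) - \<Lambda> (real m / N))
                 {real m / N .. real (Suc m) / N}" if m: "m < N" for m
  proof -
    have grid: "0 \<le> real m / N" "real m / N \<le> real (Suc m) / N" "real (Suc m) / N \<le> 1"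
      using m by (auto simp: divide_right_mono divide_le_eq_1)
    have far: "\<forall>i\<in>I. r \<le> norm (p k u (real m / N) - branch u i)"
      by (rule half_far_imp_far) (use fine_subdivisionD(5)[OF fine] m in \<open>simp add: I_def\<close>)
    have F_lift: "F m (p k u t) = s k u t" if "t \<in> {real m / N .. real (Suc m) / N}" for t
      using lift_eq_local_sqrt_on_piece(2)[OF u k j fine m that] unfolding F_def I_def by (rule sym)
    have prim: "((\<lambda>x. - 2 * x / F m x) has_field_derivative hs x / F m x) (at x)"
      if x: "x \<in> ball (p k u (real m / N)) r" for x
      unfolding F_def hs_def I_def
      by (rule local_sqrt_exact_primitive[OF far[unfolded I_def] lift_nonzero[OF u k] x])
         (use m in \<open>simp add: subdivision_node_in_unit_interval\<close>)
    have "(lifted_integrand hs (p k u) (s k u) has_integral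
            (\<lambda>x. - 2 * x / F m x) (p k u (real (Suc m) / N)) - (\<lambda>x. - 2 * x / F m x) (p k u (real m / N)))
            {real m / N .. real (Suc m) / N}"
      unfolding lifted_integrand_def
    proof (rule has_integral_path_primitive[OF cycle_valid_path[OF u k] grid open_ball])
      show "p k u ` {real m / N .. real (Suc m) / N} \<subseteq> ball (p k u (real m / N)) r"
        using lift_eq_local_sqrt_on_piece(1)[OF u k j fine m] by blast
      show "\<forall>x\<in>ball (p k u (real m / N)) r. ((\<lambda>x. - 2 * x / F m x) has_field_derivative hs x / F m x) (at x)"
        using prim by blast
      show "\<forall>t\<in>{real m / N .. real (Suc m) / N}. hs (p k u t) / s k u t = hs (p k u t) / F m (p k u t)"
        using F_lift by simp
    qed
    moreover note F_lift
    then have "F m (p k u (real m / N)) = s k u (real m / N)"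
      "F m (p k u (real (Suc m) / N)) = s k u (real (Suc m) / N)" using grid(2) by auto
    ultimately show ?thesis unfolding \<Lambda>_def by simp
  qed
  have "(lifted_integrand hs (p k u) (s k u) has_integral (\<Sum>m<N. \<Lambda> (real (Suc m) / N) - \<Lambda> (real m / N))) {0..1}"
    by (rule has_integral_uniform_subdivision[OF N piece])
  moreover have "(\<Sum>m<N. \<Lambda> (real (Suc m) / N) - \<Lambda> (real m / N)) = \<Lambda> 1 - \<Lambda> 0"
    using sum_lessThan_telescope[of "\<lambda>m. \<Lambda> (real m / N)" N] N by simp
  moreover have "\<Lambda> 1 = \<Lambda> 0" unfolding \<Lambda>_def using cycle_closed[OF u k] lift_closed[OF u k] by simp
  ultimately show ?thesis unfolding hs_def by simp
qed

lemma period_has_field_derivative: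
  assumes u: "u \<in> U" and k: "k \<in> {1..2*g}" and j: "j \<in> {2..2*g+1}"
  shows "((\<lambda>z. period (p k (u(j := z))) (s k (u(j := z)))) has_field_derivative
           period_pole (p k u) (s k u) (u j) / 2) (at (u j))"
proof -
  have "lifted_integral (\<lambda>x. 1 / (2 * (x - u j))) (p k u) (s k u)
      = lifted_integral (\<lambda>x. 1 / 2 * (1 / (x - u j))) (p k u) (s k u)"
    by simp
  also have "\<dots> = period_pole (p k u) (s k u) (u j) / 2"
    unfolding lifted_integral_cmult period_pole_eq_lifted_integral by simp
  finally have eq: "lifted_integral (\<lambda>x. 1 / (2 * (x - u j))) (p k u) (s k u)
      = period_pole (p k u) (s k u) (u j) / 2" .
  show ?thesis
    using lifted_integral_has_field_derivative[OF u k j holomorphic_on_const[of 1]]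
    unfolding period_eq_lifted_integral eq[symmetric] .
qed

lemma period_pole_has_field_derivative:
  assumes g: "g \<ge> 1" and u: "u \<in> U" and k: "k \<in> {1..2*g}"
    and i: "i \<in> {2..2*g+1}" and j: "j \<in> {2..2*g+1}" and ij: "i \<noteq> j" and uij: "u i \<noteq> u j"
  shows "((\<lambda>z. period_pole (p k (u(j := z))) (s k (u(j := z))) (u i)) has_field_derivative
           (period_pole (p k u) (s k u) (u i) - period_pole (p k u) (s k u) (u j)) / (2 * (u i - u j)))
         (at (u j))"
proof -
  define C where "C = 1 / (2 * (u i - u j))"
  define Q where "Q z = period_pole (p k u) (s k u) z" for z
  have bi: "branch u i = u i" "branch u j = u j" using i j by (auto simp: branch_def)
  have iI: "i \<in> {1..2*g+1}" "j \<in> {1..2*g+1}" using i j by auto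
  have pole_int: "(lifted_integrand (\<lambda>x. 1 / (x - u l)) (p k u) (s k u) has_integral Q (u l)) {0..1}"
    if "l \<in> {1..2*g+1}" "branch u l = u l" for l
    using lifted_integral_has_integral[OF g u k, of "\<lambda>x. 1 / (x - u l)"] that
    unfolding Q_def period_pole_eq_lifted_integral by (force intro!: holomorphic_intros)
  have "(lifted_integrand (\<lambda>x. C * (1 / (x - u i) - 1 / (x - u j))) (p k u) (s k u) has_integral
          C * (Q (u i) - Q (u j))) {0..1}"
    unfolding lifted_integrand_cmult lifted_integrand_diff
    by (intro has_integral_mult_right has_integral_diff pole_int iI bi)
  then have LC: "lifted_integral (\<lambda>x. C * (1 / (x - u i) - 1 / (x - u j))) (p k u) (s k u)
      = (Q (u i) - Q (u j)) / (2 * (u i - u j))"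
    unfolding lifted_integral_def C_def by (simp add: integral_unique)
  have cong: "lifted_integral (\<lambda>x. 1 / (x - u i) / (2 * (x - u j))) (p k u) (s k u)
      = lifted_integral (\<lambda>x. C * (1 / (x - u i) - 1 / (x - u j))) (p k u) (s k u)"
  proof (rule lifted_integral_cong)
    fix t :: real assume t: "t \<in> {0..1}"
    have "p k u t - u i \<noteq> 0" "p k u t - u j \<noteq> 0"
      using cycle_avoids_branch[OF u k t iI(1)] cycle_avoids_branch[OF u k t iI(2)] bi by auto
    then show "1 / (p k u t - u i) / (2 * (p k u t - u j)) = C * (1 / (p k u t - u i) - 1 / (p k u t - u j))"
      using partial_fractions_two_poles[of "p k u t - u i" "p k u t - u j"] uij unfolding C_def by simp
  qed
  have "(\<lambda>x. 1 / (x - u i)) holomorphic_on - branch u ` ({1..2*g+1} - {j})"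
    using iI(1) ij bi by (intro holomorphic_intros) force
  from lifted_integral_has_field_derivative[OF u k j this]
  show ?thesis unfolding cong LC Q_def period_pole_eq_lifted_integral .
qed

lemma period_relation:
  assumes g: "g \<ge> 1" and u: "u \<in> U" and k: "k \<in> {1..2*g}"
  shows "(2 * of_nat g - 1) * period (p k u) (s k u)
           + (\<Sum>i\<in>{2..2*g+1}. u i * period_pole (p k u) (s k u) (u i)) = 0"
proof -
  define LI where "LI h = lifted_integrand h (p k u) (s k u)" for h
  have pole_int: "(LI (\<lambda>x. 1 / (x - u i)) has_integral period_pole (p k u) (s k u) (u i)) {0..1}"
    if i: "i \<in> {2..2*g+1}" for i
  proof -
    have "u i \<in> branch u ` {1..2*g+1}"
      using i by (intro image_eqI[of _ _ i]) (auto simp: branch_def)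
    then have "(\<lambda>x. 1 / (x - u i)) holomorphic_on - branch u ` {1..2*g+1}"
      by (intro holomorphic_intros) auto
    from lifted_integral_has_integral[OF g u k this]
    show ?thesis unfolding LI_def period_pole_eq_lifted_integral .
  qed
  have "(LI (\<lambda>_. 1) has_integral period (p k u) (s k u)) {0..1}"
    using lifted_integral_has_integral[OF g u k holomorphic_on_const]
    unfolding LI_def period_eq_lifted_integral .
  moreover have "((\<lambda>t. \<Sum>i\<in>{2..2*g+1}. u i * LI (\<lambda>x. 1 / (x - u i)) t) has_integral
      (\<Sum>i\<in>{2..2*g+1}. u i * period_pole (p k u) (s k u) (u i))) {0..1}"
    by (rule has_integral_sum[OF finite_atLeastAtMost]) (use pole_int has_integral_mult_right in blast)
  ultimately have "((\<lambda>t. (2 * of_nat g - 1) * LI (\<lambda>_. 1) t + (\<Sum>i\<in>{2..2*g+1}. u i * LI (\<lambda>x. 1 / (x - u i)) t))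
      has_integral (2 * of_nat g - 1) * period (p k u) (s k u)
        + (\<Sum>i\<in>{2..2*g+1}. u i * period_pole (p k u) (s k u) (u i))) {0..1}"
    by (intro has_integral_add has_integral_mult_right)
  moreover have "(\<lambda>t. (2 * of_nat g - 1) * LI (\<lambda>_. 1) t + (\<Sum>i\<in>{2..2*g+1}. u i * LI (\<lambda>x. 1 / (x - u i)) t))
      = LI (\<lambda>x. (2 * of_nat g - 1) + (\<Sum>i\<in>{2..2*g+1}. u i / (x - u i)))"
  proof -
    have eq: "(\<lambda>x. (2 * of_nat g - 1) + (\<Sum>i\<in>{2..2*g+1}. u i / (x - u i)))
        = (\<lambda>x. (2 * of_nat g - 1) * 1 + (\<Sum>i\<in>{2..2*g+1}. u i * (1 / (x - u i))))"
      by simp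
    show ?thesis
      unfolding LI_def eq lifted_integrand_add lifted_integrand_cmult lifted_integrand_sum ..
  qed
  ultimately show ?thesis
    using has_integral_unique[OF _ lifted_integral_exact_form[OF g u k, folded LI_def]] by simp
qed

definition gamma_period :: "(nat \<Rightarrow> complex) \<Rightarrow> (nat \<Rightarrow> complex) \<Rightarrow> complex" where
  "gamma_period c w = (\<Sum>k\<in>{1..2*g}. c k * period (p k w) (s k w))"

definition gamma_period_pole :: "(nat \<Rightarrow> complex) \<Rightarrow> (nat \<Rightarrow> complex) \<Rightarrow> complex \<Rightarrow> complex" where
  "gamma_period_pole c w z = (\<Sum>k\<in>{1..2*g}. c k * period_pole (p k w) (s k w) z)"

lemma acoef_eq:
  "acoef g p s c w i =
     (if i = 1 then - gamma_period c w else gamma_period c w + w i * gamma_period_pole c w (w i))"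
  unfolding acoef_def gamma_period_def gamma_period_pole_def ..

lemma gamma_period_has_field_derivative:
  assumes u: "u \<in> U" and j: "j \<in> {2..2*g+1}"
  shows "((\<lambda>z. gamma_period c (u(j := z))) has_field_derivative gamma_period_pole c u (u j) / 2) (at (u j))"
proof -
  have "((\<lambda>z. gamma_period c (u(j := z))) has_field_derivative
          (\<Sum>k\<in>{1..2*g}. c k * (period_pole (p k u) (s k u) (u j) / 2))) (at (u j))"
    unfolding gamma_period_def by (intro DERIV_sum DERIV_cmult period_has_field_derivative[OF u _ j])
  then show ?thesis unfolding gamma_period_pole_def by (simp add: sum_divide_distrib)
qed

lemma gamma_period_pole_has_field_derivative:
  assumes g: "g \<ge> 1" and u: "u \<in> U" and i: "i \<in> {2..2*g+1}" and j: "j \<in> {2..2*g+1}"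
    and ij: "i \<noteq> j" and uij: "u i \<noteq> u j"
  shows "((\<lambda>z. gamma_period_pole c (u(j := z)) (u i)) has_field_derivative
           (gamma_period_pole c u (u i) - gamma_period_pole c u (u j)) / (2 * (u i - u j))) (at (u j))"
proof -
  have "((\<lambda>z. gamma_period_pole c (u(j := z)) (u i)) has_field_derivative
          (\<Sum>k\<in>{1..2*g}. c k * ((period_pole (p k u) (s k u) (u i) - period_pole (p k u) (s k u) (u j))
             / (2 * (u i - u j))))) (at (u j))"
    unfolding gamma_period_pole_def
    by (intro DERIV_sum DERIV_cmult period_pole_has_field_derivative[OF g u _ i j ij uij])
  then show ?thesis
    unfolding gamma_period_pole_def
    by (simp add: sum_divide_distrib right_diff_distrib sum_subtractf diff_divide_distrib)
qed

lemma acoef_1_has_field_derivative: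
  assumes u: "u \<in> U" and j: "j \<in> {2..2*g+1}" and uj: "u j \<noteq> 0"
  shows "((\<lambda>z. acoef g p s c (u(j := z)) 1) has_field_derivative
           - (acoef g p s c u 1 + acoef g p s c u j) / (2 * u j)) (at (u j))"
proof -
  have "- (acoef g p s c u 1 + acoef g p s c u j) / (2 * u j) = - (gamma_period_pole c u (u j) / 2)"
    using j uj by (simp add: acoef_eq)
  then show ?thesis
    unfolding acoef_eq using DERIV_minus[OF gamma_period_has_field_derivative[OF u j]] by simp
qed

lemma acoef_has_field_derivative:
  assumes g: "g \<ge> 1" and u: "u \<in> U" and i: "i \<in> {2..2*g+1}" and j: "j \<in> {2..2*g+1}"
    and ij: "i \<noteq> j" and uij: "u i \<noteq> u j"
  shows "((\<lambda>z. acoef g p s c (u(j := z)) i) has_field_derivative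
           (acoef g p s c u j - acoef g p s c u i) / (2 * (u j - u i))) (at (u j))"
proof -
  define P where "P = gamma_period c u"
  define Q where "Q z = gamma_period_pole c u z" for z
  have "((\<lambda>z. gamma_period c (u(j := z)) + u i * gamma_period_pole c (u(j := z)) (u i))
          has_field_derivative Q (u j) / 2 + u i * ((Q (u i) - Q (u j)) / (2 * (u i - u j)))) (at (u j))"
    unfolding Q_def
    by (intro DERIV_add DERIV_cmult gamma_period_has_field_derivative[OF u j]
          gamma_period_pole_has_field_derivative[OF g u i j ij uij])
  moreover have "Q (u j) / 2 + u i * ((Q (u i) - Q (u j)) / (2 * (u i - u j)))
      = (acoef g p s c u j - acoef g p s c u i) / (2 * (u j - u i))"
  proof -
    have a: "acoef g p s c u j = P + u j * Q (u j)" "acoef g p s c u i = P + u i * Q (u i)"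
      using i j unfolding acoef_eq P_def Q_def by auto
    have "u i - u j \<noteq> 0" "u j - u i \<noteq> 0" using uij by auto
    then show ?thesis unfolding a by (simp add: field_simps)
  qed
  moreover have "(\<lambda>z. acoef g p s c (u(j := z)) i)
      = (\<lambda>z. gamma_period c (u(j := z)) + u i * gamma_period_pole c (u(j := z)) (u i))"
    using i ij unfolding acoef_eq by auto
  ultimately show ?thesis by simp
qed

lemma acoef_sum_eq_zero:
  assumes g: "g \<ge> 1" and u: "u \<in> U"
  shows "(\<Sum>i\<in>{1..2*g+1}. acoef g p s c u i) = 0"
proof -
  have I: "{1..2*g+1} = insert 1 {2..2*g+1}" by auto
  have "(\<Sum>i\<in>{1..2*g+1}. acoef g p s c u i)
      = - gamma_period c u + (\<Sum>i\<in>{2..2*g+1}. gamma_period c u + u i * gamma_period_pole c u (u i))"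
    unfolding I by (simp add: acoef_eq)
  also have "\<dots> = (2 * of_nat g - 1) * gamma_period c u + (\<Sum>i\<in>{2..2*g+1}. u i * gamma_period_pole c u (u i))"
    by (simp add: sum.distrib algebra_simps)
  also have "\<dots> = (\<Sum>k\<in>{1..2*g}. c k * ((2 * of_nat g - 1) * period (p k u) (s k u)
                     + (\<Sum>i\<in>{2..2*g+1}. u i * period_pole (p k u) (s k u) (u i))))"
  proof -
    have "(\<Sum>i\<in>{2..2*g+1}. u i * gamma_period_pole c u (u i))
        = (\<Sum>i\<in>{2..2*g+1}. \<Sum>k\<in>{1..2*g}. c k * (u i * period_pole (p k u) (s k u) (u i)))"
      unfolding gamma_period_pole_def by (simp add: sum_distrib_left mult_ac)
    also have "\<dots> = (\<Sum>k\<in>{1..2*g}. \<Sum>i\<in>{2..2*g+1}. c k * (u i * period_pole (p k u) (s k u) (u i)))"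
      by (rule sum.swap)
    finally show ?thesis
      unfolding gamma_period_def by (simp add: sum_distrib_left distrib_left sum.distrib mult_ac)
  qed
  also have "\<dots> = 0" using period_relation[OF g u] by simp
  finally show ?thesis .
qed

lemma acoef_has_field_derivative_alpha:
  assumes g: "g \<ge> 1" and u: "u \<in> U" and i: "i \<in> {1..2*g+1}" and j: "j \<in> {2..2*g+1}"
    and ij: "i \<noteq> j" and uj: "u j \<noteq> 0" and uij: "i \<noteq> 1 \<Longrightarrow> u i \<noteq> u j"
  shows "((\<lambda>z. acoef g p s c (u(j := z)) i) has_field_derivative
           2 * (alpha j * acoef g p s c u i - alpha i * acoef g p s c u j) / (branch u j - branch u i))
         (at (u j))"
proof (cases "i = 1")
  case True
  have "2 * (alpha j * acoef g p s c u i - alpha i * acoef g p s c u j) / (branch u j - branch u i)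
      = - (acoef g p s c u 1 + acoef g p s c u j) / (2 * u j)"
    using True j uj by (auto simp: alpha_def branch_def field_simps)
  then show ?thesis using acoef_1_has_field_derivative[OF u j uj] True by simp
next
  case False
  then have i2: "i \<in> {2..2*g+1}" using i by auto
  have "2 * (alpha j * acoef g p s c u i - alpha i * acoef g p s c u j) / (branch u j - branch u i)
      = (acoef g p s c u j - acoef g p s c u i) / (2 * (u j - u i))"
    using False j i2 uij by (auto simp: alpha_def branch_def field_simps)
  then show ?thesis using acoef_has_field_derivative[OF g u i2 j ij uij[OF False]] by simp
qed

end

theorem theorem2:
  fixes g :: nat
    and U :: "(nat \<Rightarrow> complex) set"
    and p s :: "nat \<Rightarrow> (nat \<Rightarrow> complex) \<Rightarrow> real \<Rightarrow> complex"
    and c :: "nat \<Rightarrow> complex"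
  assumes g: "g \<ge> 1"
    and U_open: "open U"
    and U_nonzero: "\<And>u i. u \<in> U \<Longrightarrow> i \<in> {2..2*g+1} \<Longrightarrow> u i \<noteq> 0"
    and U_distinct: "\<And>u i j. u \<in> U \<Longrightarrow> i \<in> {2..2*g+1} \<Longrightarrow> j \<in> {2..2*g+1}
                        \<Longrightarrow> i \<noteq> j \<Longrightarrow> u i \<noteq> u j"
    and cycles: "\<And>u k. u \<in> U \<Longrightarrow> k \<in> {1..2*g} \<Longrightarrow> lifted_cycle g u (p k u) (s k u)"
    and cont_p: "\<And>k. k \<in> {1..2*g} \<Longrightarrow> continuous_on (U \<times> {0..1}) (\<lambda>x. p k (fst x) (snd x))"
    and cont_s: "\<And>k. k \<in> {1..2*g} \<Longrightarrow> continuous_on (U \<times> {0..1}) (\<lambda>x. s k (fst x) (snd x))"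
  shows "(\<forall>u\<in>U. \<forall>i\<in>{1..2*g+1}. \<forall>j\<in>{2..2*g+1}. i \<noteq> j \<longrightarrow>
            ((\<lambda>z. acoef g p s c (u(j := z)) i) has_field_derivative
               (2 * (alpha j * acoef g p s c u i - alpha i * acoef g p s c u j)
                  / (branch u j - branch u i))) (at (u j)))
       \<and> (\<forall>u\<in>U. (\<Sum>i\<in>{1..2*g+1}. acoef g p s c u i) = 0)
       \<and> (\<forall>u\<in>U. \<forall>j\<in>{2..2*g+1}.
            ((\<lambda>z. acoef g p s c (u(j := z)) 1) has_field_derivative
               (- (acoef g p s c u 1 + acoef g p s c u j) / (2 * u j))) (at (u j)))
       \<and> (\<forall>u\<in>U. \<forall>i\<in>{2..2*g+1}. \<forall>j\<in>{2..2*g+1}. i \<noteq> j \<longrightarrow>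
            ((\<lambda>z. acoef g p s c (u(j := z)) i) has_field_derivative
               ((acoef g p s c u j - acoef g p s c u i) / (2 * (u j - u i)))) (at (u j)))"
proof -
  interpret cycle_family g U p s using U_open cycles cont_p cont_s by unfold_locales
  show ?thesis
    using acoef_has_field_derivative_alpha[OF g] acoef_sum_eq_zero[OF g] acoef_1_has_field_derivative
      acoef_has_field_derivative[OF g] U_nonzero U_distinct by auto
qed

end
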